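(* Let $0<\varepsilon<2/9$ and let $\mathbf{U}$ be the $7\times 7$ matrix $$\mathbf{U}=\begin{pmatrix} 0 & -1 & \varepsilon & -10 & -\tfrac13+\varepsilon & -\tfrac13+\varepsilon & -\tfrac13+\varepsilon\\ \varepsilon & 0 & -1 & -10 & -\tfrac13+\varepsilon & -\tfrac13+\varepsilon & -\tfrac13+\varepsilon\\ -1 & \varepsilon & 0 & -10 & -\tfrac13+\varepsilon & -\tfrac13+\varepsilon & -\tfrac13+\varepsilon\\ -2 & -2 & 2 & 0 & -\tfrac13 & -\tfrac13 & -\tfrac13\\ -\tfrac13 & -\tfrac13 & -\tfrac13 & 10 & 0 & -1 & \varepsilon\\ -\tfrac13 & -\tfrac13 & -\tfrac13 & 10 & \varepsilon & 0 & -1\\ -\tfrac13 & -\tfrac13 & -\tfrac13 & 10 & -1 & \varepsilon & 0 \end{pmatrix}.$$ Let $\mathbf{x}(\cdot)$ be a solution of the best-reply dynamics in the game with payoff matrix $\mathbf{U}$ such that neither $x_1(0)=x_2(0)=x_3(0)$ nor $x_5(0)=x_6(0)=x_7(0)$. Then there exists a time $T>0$ such that none of the pure strategies $1,2,3$ is a best reply to $\mathbf{x}(T)$, i.e. $(\mathbf{U}\mathbf{x}(T))_i<\max_{1\le j\le 7}(\mathbf{U}\mathbf{x}(T))_j$ for $i=1,2,3$.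
   Context: $S_7=\{\mathbf{x}\in\mathbb{R}_+^7:\sum_i x_i=1\}$. The best-reply dynamics is the differential inclusion $\dot{\mathbf{x}}\in BR(\mathbf{x})-\mathbf{x}$, $BR(\mathbf{x})=\{\mathbf{y}\in S_7:\mathbf{y}\cdot\mathbf{U}\mathbf{x}=\max_{\mathbf{z}\in S_7}\mathbf{z}\cdot\mathbf{U}\mathbf{x}\}$; a solution is an absolutely continuous $\mathbf{x}:\mathbb{R}_+\to S_7$ satisfying it for almost every $t$. *)

theory Defs
  imports "HOL-Analysis.Analysis" "HOL-Library.Numeral_Type"
begin

text \<open>Strategies 1..7 are the components 1,...,7 of a vector of type real^7
  (the index numeral 7 of the type 7 is the seventh coordinate).\<close>

definition simplex7 :: "(real^7) set" where
  "simplex7 = {x. (\<forall>i. 0 \<le> x $ i) \<and> (\<Sum>i\<in>UNIV. x $ i) = 1}"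

definition BR :: "real^7^7 \<Rightarrow> real^7 \<Rightarrow> (real^7) set" where
  "BR U x = {y \<in> simplex7. \<forall>z \<in> simplex7. z \<bullet> (U *v x) \<le> y \<bullet> (U *v x)}"

definition abs_cont_on :: "(real \<Rightarrow> 'a::real_normed_vector) \<Rightarrow> real \<Rightarrow> real \<Rightarrow> bool" where
  "abs_cont_on f a b \<longleftrightarrow>
    (\<forall>e>0. \<exists>d>0. \<forall>(n::nat) (l::nat \<Rightarrow> real) (r::nat \<Rightarrow> real).
       (\<forall>k<n. a \<le> l k \<and> l k \<le> r k \<and> r k \<le> b) \<and>
       (\<forall>k<n. \<forall>j<n. k \<noteq> j \<longrightarrow> r k \<le> l j \<or> r j \<le> l k) \<and>
       (\<Sum>k<n. r k - l k) < d
       \<longrightarrow> (\<Sum>k<n. norm (f (r k) - f (l k))) < e)"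

definition BR_solution :: "real^7^7 \<Rightarrow> (real \<Rightarrow> real^7) \<Rightarrow> bool" where
  "BR_solution U x \<longleftrightarrow>
     (\<forall>t\<ge>0. x t \<in> simplex7) \<and>
     (\<forall>T\<ge>0. abs_cont_on x 0 T) \<and>
     (AE t in lborel. t \<ge> 0 \<longrightarrow>
        (\<exists>v. (x has_vector_derivative v) (at t within {0..}) \<and> v \<in> (\<lambda>y. y - x t) ` BR U (x t)))"

definition Umat :: "real \<Rightarrow> real^7^7" where
  "Umat e = vector [
     vector [0, -1, e, -10, -1/3+e, -1/3+e, -1/3+e],
     vector [e, 0, -1, -10, -1/3+e, -1/3+e, -1/3+e],
     vector [-1, e, 0, -10, -1/3+e, -1/3+e, -1/3+e],
     vector [-2, -2, 2, 0, -1/3, -1/3, -1/3],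
     vector [-1/3, -1/3, -1/3, 10, 0, -1, e],
     vector [-1/3, -1/3, -1/3, 10, e, 0, -1],
     vector [-1/3, -1/3, -1/3, 10, -1, e, 0]]"

end

theory Submission
  imports Defs
begin

text \<open>Suppose that one of the strategies 1, 2, 3 is a best reply at every positive time. Along the
  best-reply dynamics the rescaled frequencies \<open>z\<^sub>i(t) = e\<^sup>t x\<^sub>i(t)\<close> never decrease, and
  \<open>z\<^sub>i\<close> stays constant while \<open>i\<close> is not a best reply. Inside each of the blocks {1,2,3} and
  {5,6,7} the strategies play rock--paper--scissors against each other, the rest of their payoffs
  being common to the block. The largest rock--paper--scissors payoff \<open>W\<close> of a block never
  decreases: the Lyapunov function \<open>W - (e - 1)/3 S\<close>, with \<open>S\<close> the rescaled mass of the block,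
  never decreases and is positive at time 0 by the non-degeneracy hypotheses, so the three payoffs
  never tie. Comparing with the block {5,6,7} shows that the mass \<open>S\<close> of {1,2,3} grows like
  \<open>e\<^sup>t\<close>, hence each of 1, 2, 3 is a best reply at arbitrarily late times. At the last time
  strategy 3 is a best reply before strategy 1 next becomes one, the payoff comparisons with
  strategies 1 and 4 and with the block {5,6,7} give linear constraints bounding
  \<open>z\<^sub>1 + z\<^sub>2 + z\<^sub>3\<close> by a constant, which contradicts its growth.\<close>

section \<open>Absolute continuity and Dini derivatives\<close>

lemma abs_cont_onE:
  assumes "abs_cont_on f a b" "\<epsilon> > 0"
  obtains \<delta> where "\<delta> > 0"
    "\<And>(n::nat) (l::nat \<Rightarrow> real) r. \<forall>k<n. a \<le> l k \<and> l k \<le> r k \<and> r k \<le> b \<Longrightarrow>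
       \<forall>k<n. \<forall>j<n. k \<noteq> j \<longrightarrow> r k \<le> l j \<or> r j \<le> l k \<Longrightarrow> (\<Sum>k<n. r k - l k) < \<delta> \<Longrightarrow>
       (\<Sum>k<n. norm (f (r k) - f (l k))) < \<epsilon>"
proof -
  obtain \<delta> where "\<delta> > 0" and small: "\<forall>(n::nat) (l::nat \<Rightarrow> real) r. (\<forall>k<n. a \<le> l k \<and> l k \<le> r k \<and> r k \<le> b) \<and>
       (\<forall>k<n. \<forall>j<n. k \<noteq> j \<longrightarrow> r k \<le> l j \<or> r j \<le> l k) \<and> (\<Sum>k<n. r k - l k) < \<delta>
       \<longrightarrow> (\<Sum>k<n. norm (f (r k) - f (l k))) < \<epsilon>"
    using assms unfolding abs_cont_on_def by blast
  show thesis
    by (rule that[OF \<open>\<delta> > 0\<close>]) (use small in blast)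
qed

lemma abs_cont_on_imp_continuous_on:
  fixes f :: "real \<Rightarrow> 'a::real_normed_vector"
  assumes "abs_cont_on f a b"
  shows "continuous_on {a..b} f"
  unfolding continuous_on_iff
proof (intro ballI allI impI)
  fix t \<epsilon> :: real assume t: "t \<in> {a..b}" and \<epsilon>: "0 < \<epsilon>"
  obtain \<delta> where \<delta>: "\<delta> > 0" and small: "\<And>(n::nat) (l::nat \<Rightarrow> real) r. \<forall>k<n. a \<le> l k \<and> l k \<le> r k \<and> r k \<le> b \<Longrightarrow>
       \<forall>k<n. \<forall>j<n. k \<noteq> j \<longrightarrow> r k \<le> l j \<or> r j \<le> l k \<Longrightarrow> (\<Sum>k<n. r k - l k) < \<delta> \<Longrightarrow>
       (\<Sum>k<n. norm (f (r k) - f (l k))) < \<epsilon>"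
    by (rule abs_cont_onE[OF assms \<epsilon>]) (rule that)
  show "\<exists>\<delta>>0. \<forall>s\<in>{a..b}. dist s t < \<delta> \<longrightarrow> dist (f s) (f t) < \<epsilon>"
  proof (intro exI[of _ \<delta>] conjI ballI impI \<delta>)
    fix s assume s: "s \<in> {a..b}" "dist s t < \<delta>"
    have "norm (f (max s t) - f (min s t)) < \<epsilon>"
      using small[of 1 "\<lambda>_. min s t" "\<lambda>_. max s t"] s t by (auto simp: dist_real_def)
    then show "dist (f s) (f t) < \<epsilon>"
      by (cases "s \<le> t") (simp_all add: dist_norm norm_minus_commute max_def min_def)
  qed
qed

lemma abs_cont_on_subinterval:
  assumes "abs_cont_on f a b" "a \<le> c" "d \<le> b"
  shows "abs_cont_on f c d"
  unfolding abs_cont_on_def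
proof (intro allI impI)
  fix \<epsilon> :: real assume "\<epsilon> > 0"
  then obtain \<delta> where "\<delta> > 0" and small: "\<And>(n::nat) (l::nat \<Rightarrow> real) r. \<forall>k<n. a \<le> l k \<and> l k \<le> r k \<and> r k \<le> b \<Longrightarrow>
       \<forall>k<n. \<forall>j<n. k \<noteq> j \<longrightarrow> r k \<le> l j \<or> r j \<le> l k \<Longrightarrow> (\<Sum>k<n. r k - l k) < \<delta> \<Longrightarrow>
       (\<Sum>k<n. norm (f (r k) - f (l k))) < \<epsilon>"
    by (rule abs_cont_onE[OF assms(1)]) (rule that)
  show "\<exists>\<delta>>0. \<forall>(n::nat) (l::nat \<Rightarrow> real) r. (\<forall>k<n. c \<le> l k \<and> l k \<le> r k \<and> r k \<le> d) \<and>
       (\<forall>k<n. \<forall>j<n. k \<noteq> j \<longrightarrow> r k \<le> l j \<or> r j \<le> l k) \<and> (\<Sum>k<n. r k - l k) < \<delta>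
       \<longrightarrow> (\<Sum>k<n. norm (f (r k) - f (l k))) < \<epsilon>"
  proof (intro exI[of _ \<delta>] conjI allI impI \<open>\<delta> > 0\<close>)
    fix n :: nat and l r :: "nat \<Rightarrow> real"
    assume A: "(\<forall>k<n. c \<le> l k \<and> l k \<le> r k \<and> r k \<le> d) \<and>
       (\<forall>k<n. \<forall>j<n. k \<noteq> j \<longrightarrow> r k \<le> l j \<or> r j \<le> l k) \<and> (\<Sum>k<n. r k - l k) < \<delta>"
    with assms(2,3) have "\<forall>k<n. a \<le> l k \<and> l k \<le> r k \<and> r k \<le> b" by force
    with A show "(\<Sum>k<n. norm (f (r k) - f (l k))) < \<epsilon>" by (intro small) auto
  qed
qed

lemma abs_cont_on_lipschitz_wrt:
  fixes x :: "real \<Rightarrow> 'a::real_normed_vector" and g :: "real \<Rightarrow> real"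
  assumes ac: "abs_cont_on x a b" and "L \<ge> 0"
    and lip: "\<And>s t. s \<in> {a..b} \<Longrightarrow> t \<in> {a..b} \<Longrightarrow> \<bar>g s - g t\<bar> \<le> L * (\<bar>s - t\<bar> + norm (x s - x t))"
  shows "abs_cont_on g a b"
  unfolding abs_cont_on_def
proof (intro allI impI)
  fix \<epsilon> :: real assume "\<epsilon> > 0"
  define \<epsilon>' where "\<epsilon>' = \<epsilon> / (2 * (L + 1))"
  have "\<epsilon>' > 0"
    using \<open>\<epsilon> > 0\<close> \<open>L \<ge> 0\<close> by (simp add: \<epsilon>'_def)
  then obtain \<delta> where "\<delta> > 0" and small: "\<And>(n::nat) (l::nat \<Rightarrow> real) r. \<forall>k<n. a \<le> l k \<and> l k \<le> r k \<and> r k \<le> b \<Longrightarrow>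
       \<forall>k<n. \<forall>j<n. k \<noteq> j \<longrightarrow> r k \<le> l j \<or> r j \<le> l k \<Longrightarrow> (\<Sum>k<n. r k - l k) < \<delta> \<Longrightarrow>
       (\<Sum>k<n. norm (x (r k) - x (l k))) < \<epsilon>'"
    by (rule abs_cont_onE[OF ac]) (rule that)
  show "\<exists>\<delta>>0. \<forall>(n::nat) (l::nat \<Rightarrow> real) r. (\<forall>k<n. a \<le> l k \<and> l k \<le> r k \<and> r k \<le> b) \<and>
       (\<forall>k<n. \<forall>j<n. k \<noteq> j \<longrightarrow> r k \<le> l j \<or> r j \<le> l k) \<and> (\<Sum>k<n. r k - l k) < \<delta>
       \<longrightarrow> (\<Sum>k<n. norm (g (r k) - g (l k))) < \<epsilon>"
  proof (intro exI[of _ "min \<delta> \<epsilon>'"] conjI allI impI)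
    show "min \<delta> \<epsilon>' > 0"
      using \<open>\<delta> > 0\<close> \<open>\<epsilon>' > 0\<close> by simp
    fix n :: nat and l r :: "nat \<Rightarrow> real"
    assume A: "(\<forall>k<n. a \<le> l k \<and> l k \<le> r k \<and> r k \<le> b) \<and>
       (\<forall>k<n. \<forall>j<n. k \<noteq> j \<longrightarrow> r k \<le> l j \<or> r j \<le> l k) \<and> (\<Sum>k<n. r k - l k) < min \<delta> \<epsilon>'"
    have "(\<Sum>k<n. norm (g (r k) - g (l k))) \<le> (\<Sum>k<n. L * ((r k - l k) + norm (x (r k) - x (l k))))"
    proof (rule sum_mono)
      fix k assume "k \<in> {..<n}"
      with A have "r k \<in> {a..b}" "l k \<in> {a..b}" "l k \<le> r k" by auto
      with lip[of "r k" "l k"] show "norm (g (r k) - g (l k)) \<le> L * ((r k - l k) + norm (x (r k) - x (l k)))"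
        by simp
    qed
    also have "\<dots> = L * ((\<Sum>k<n. r k - l k) + (\<Sum>k<n. norm (x (r k) - x (l k))))"
      by (simp add: sum.distrib distrib_left sum_distrib_left)
    also have "\<dots> \<le> L * (2 * \<epsilon>')"
      using A small[of n l r] \<open>L \<ge> 0\<close> by (intro mult_left_mono) auto
    also have "\<dots> < \<epsilon>"
      using \<open>\<epsilon> > 0\<close> \<open>L \<ge> 0\<close> by (simp add: \<epsilon>'_def field_simps)
    finally show "(\<Sum>k<n. norm (g (r k) - g (l k))) < \<epsilon>" .
  qed
qed

lemma component_of_open_subset_interval:
  fixes G :: "real set"
  assumes "open G" "G \<subseteq> {a<..<b}" "C \<in> components G"
  shows "C = {Inf C<..<Sup C}" "Inf C < Sup C" "a \<le> Inf C" "Sup C \<le> b"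
proof -
  have "open C" "connected C" "C \<noteq> {}" "C \<subseteq> {a<..<b}"
    using assms open_components in_components_connected in_components_nonempty in_components_subset
    by blast+
  then have bdd: "bdd_below C" "bdd_above C"
    by (meson bdd_above_Ioo bdd_below_Ioo bdd_below_mono bdd_above_mono)+
  show C: "C = {Inf C<..<Sup C}"
  proof
    show "C \<subseteq> {Inf C<..<Sup C}"
    proof
      fix t assume t: "t \<in> C"
      then obtain r where "r > 0" "ball t r \<subseteq> C" using \<open>open C\<close> open_contains_ball by blast
      then have "t - r/2 \<in> C" "t + r/2 \<in> C" by (auto simp: dist_real_def subset_iff)
      then have "Inf C \<le> t - r/2" "t + r/2 \<le> Sup C" using bdd by (auto intro: cInf_lower cSup_upper)
      then show "t \<in> {Inf C<..<Sup C}" using \<open>r > 0\<close> by auto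
    qed
    show "{Inf C<..<Sup C} \<subseteq> C"
    proof
      fix t assume t: "t \<in> {Inf C<..<Sup C}"
      then obtain c1 c2 where "c1 \<in> C" "c1 < t" "c2 \<in> C" "t < c2"
        using cInf_less_iff[OF \<open>C \<noteq> {}\<close> bdd(1)] less_cSup_iff[OF \<open>C \<noteq> {}\<close> bdd(2)] by auto
      with \<open>connected C\<close> show "t \<in> C"
        unfolding is_interval_connected_1[symmetric] is_interval_1 by (meson less_imp_le)
    qed
  qed
  with \<open>C \<noteq> {}\<close> show lt: "Inf C < Sup C" by (metis greaterThanLessThan_empty_iff not_less)
  from C \<open>C \<subseteq> {a<..<b}\<close> have "{Inf C<..<Sup C} \<subseteq> {a<..<b}" by simp
  then show "a \<le> Inf C" "Sup C \<le> b"
    using lt by (simp_all add: greaterThanLessThan_subseteq_greaterThanLessThan)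
qed

lemma abs_cont_on_finite_familyE:
  fixes f :: "real \<Rightarrow> 'a::real_normed_vector"
  assumes "abs_cont_on f a b" "\<epsilon> > 0"
  obtains \<delta> where "\<delta> > 0"
    "\<And>I l r. finite I \<Longrightarrow> \<forall>i\<in>I. a \<le> l i \<and> l i \<le> r i \<and> r i \<le> b \<Longrightarrow>
       \<forall>i\<in>I. \<forall>j\<in>I. i \<noteq> j \<longrightarrow> r i \<le> l j \<or> r j \<le> l i \<Longrightarrow> (\<Sum>i\<in>I. r i - l i) < \<delta> \<Longrightarrow>
       (\<Sum>i\<in>I. norm (f (r i) - f (l i))) < \<epsilon>"
proof -
  obtain \<delta> where "\<delta> > 0" and small: "\<And>(n::nat) (l::nat \<Rightarrow> real) r. \<forall>k<n. a \<le> l k \<and> l k \<le> r k \<and> r k \<le> b \<Longrightarrow>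
       \<forall>k<n. \<forall>j<n. k \<noteq> j \<longrightarrow> r k \<le> l j \<or> r j \<le> l k \<Longrightarrow> (\<Sum>k<n. r k - l k) < \<delta> \<Longrightarrow>
       (\<Sum>k<n. norm (f (r k) - f (l k))) < \<epsilon>"
    by (rule abs_cont_onE[OF assms]) (rule that)
  show thesis
  proof (rule that[OF \<open>\<delta> > 0\<close>])
    fix I and l r :: "_ \<Rightarrow> real"
    assume I: "finite I" and
      A: "\<forall>i\<in>I. a \<le> l i \<and> l i \<le> r i \<and> r i \<le> b"
         "\<forall>i\<in>I. \<forall>j\<in>I. i \<noteq> j \<longrightarrow> r i \<le> l j \<or> r j \<le> l i" "(\<Sum>i\<in>I. r i - l i) < \<delta>"
    obtain g where g: "bij_betw g {..<card I} I"
      using ex_bij_betw_nat_finite[OF I] lessThan_atLeast0 by metis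
    then have g_in: "g k \<in> I" if "k < card I" for k
      using that by (auto simp: bij_betw_def)
    have g_inj: "g k \<noteq> g j" if "k < card I" "j < card I" "k \<noteq> j" for k j
      using g that by (auto simp: bij_betw_def inj_on_def)
    have reindex: "(\<Sum>k<card I. h (g k)) = (\<Sum>i\<in>I. h i)" for h :: "_ \<Rightarrow> real"
      using sum.reindex_bij_betw[OF g] .
    have "(\<Sum>k<card I. norm (f (r (g k)) - f (l (g k)))) < \<epsilon>"
      using A g_in g_inj reindex[of "\<lambda>i. r i - l i"] by (intro small) auto
    then show "(\<Sum>i\<in>I. norm (f (r i) - f (l i))) < \<epsilon>"
      using reindex[of "\<lambda>i. norm (f (r i) - f (l i))"] by simp
  qed
qed

lemma sum_component_lengths_le_measure:
  fixes G :: "real set"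
  assumes "open G" "G \<subseteq> {a<..<b}" "F \<subseteq> components G" "finite F"
  shows "(\<Sum>C\<in>F. Sup C - Inf C) \<le> measure lebesgue G"
proof -
  note comp = component_of_open_subset_interval[OF assms(1,2)]
  have lmeas: "S \<in> lmeasurable" if "open S" "S \<subseteq> G" for S
    using that assms(2) bounded_box[of a b] lmeasurable_open bounded_subset
    by (metis box_real(1) order.trans)
  have "(\<Sum>C\<in>F. Sup C - Inf C) = (\<Sum>C\<in>F. measure lebesgue C)"
  proof (rule sum.cong[OF refl])
    fix C assume "C \<in> F"
    then have "C \<in> components G" using assms(3) by blast
    then have "C = {Inf C<..<Sup C}" "Inf C < Sup C" by (rule comp)+
    then show "Sup C - Inf C = measure lebesgue C"
      by (metis less_imp_le measure_completion measure_lborel_Ioo sets_lborel atMost_borel greaterThanLessThan_borel)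
  qed
  also have "\<dots> = measure lebesgue (\<Union>C\<in>F. C)"
  proof (rule measure_finite_Union[symmetric, OF assms(4)])
    have "open C" "C \<subseteq> G" if "C \<in> F" for C
      using that assms(3) open_components[OF assms(1)] in_components_subset by blast+
    then have "C \<in> lmeasurable" if "C \<in> F" for C
      using that lmeas by blast
    then show "(\<lambda>C. C) ` F \<subseteq> sets lebesgue" by blast
    show "emeasure lebesgue C \<noteq> \<infinity>" if "C \<in> F" for C
      using fmeasurableD2[OF \<open>C \<in> F \<Longrightarrow> C \<in> lmeasurable\<close>[OF that]] by (metis infinity_ennreal_def)
    show "disjoint_family_on (\<lambda>C. C) F"
      using assms(3) components_nonoverlap[of _ G] by (auto simp: disjoint_family_on_def)
  qed
  also have "\<dots> \<le> measure lebesgue G"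
  proof (rule measure_mono_fmeasurable)
    show sub: "(\<Union>C\<in>F. C) \<subseteq> G"
      using assms(3) in_components_subset by blast
    have "open (\<Union>C\<in>F. C)"
      using assms(3) open_components[OF assms(1)] by blast
    with sub show "(\<Union>C\<in>F. C) \<in> sets lebesgue"
      using lmeas by blast
    show "G \<in> fmeasurable lebesgue"
      using lmeas[OF assms(1)] by simp
  qed
  finally show ?thesis .
qed

lemma disjoint_Ioo_separated:
  fixes a b c d :: real
  assumes "{a<..<b} \<inter> {c<..<d} = {}" "a < b" "c < d"
  shows "b \<le> c \<or> d \<le> a"
proof (rule ccontr)
  assume "\<not> (b \<le> c \<or> d \<le> a)"
  then have "(max a c + min b d) / 2 \<in> {a<..<b} \<inter> {c<..<d}"
    using assms(2,3) by auto
  with assms(1) show False by blast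
qed

lemma negligible_open_cover:
  fixes N :: "real set"
  assumes N: "negligible N" "N \<subseteq> {a<..<b}" and "\<delta> > 0"
  obtains G where "open G" "N \<subseteq> G" "G \<subseteq> {a<..<b}" "measure lebesgue G < \<delta>"
proof -
  obtain G0 where G0: "open G0" "N \<subseteq> G0" "G0 - N \<in> lmeasurable" "emeasure lebesgue (G0 - N) < \<delta>"
    using sets_lebesgue_outer_open[of N \<delta>] N negligible_imp_sets \<open>\<delta> > 0\<close> by blast
  define G where "G = G0 \<inter> {a<..<b}"
  have "(G0 - N) \<union> N \<in> lmeasurable"
    using G0(3) N negligible_imp_measurable by blast
  then have "measure lebesgue G \<le> measure lebesgue ((G0 - N) \<union> N)"
    using G0(1) by (intro measure_mono_fmeasurable) (auto simp: G_def)
  also have "\<dots> \<le> measure lebesgue (G0 - N) + measure lebesgue N"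
    using G0(3) N negligible_imp_measurable by (intro measure_Un_le) auto
  also have "\<dots> < \<delta>"
    using G0(3,4) N \<open>\<delta> > 0\<close> by (simp add: negligible_imp_measure0 emeasure_eq_measure2 ennreal_less_iff)
  finally have "measure lebesgue G < \<delta>" .
  moreover have "open G" "N \<subseteq> G" "G \<subseteq> {a<..<b}"
    using G0(1,2) N(2) by (auto simp: G_def)
  ultimately show thesis
    by (rule that[rotated -1])
qed

lemma components_oscillation_small:
  fixes h :: "real \<Rightarrow> real" and p q :: "real set \<Rightarrow> real"
  assumes small: "\<And>(I :: real set set) l r. finite I \<Longrightarrow> \<forall>i\<in>I. a \<le> l i \<and> l i \<le> r i \<and> r i \<le> b \<Longrightarrow>
       \<forall>i\<in>I. \<forall>j\<in>I. i \<noteq> j \<longrightarrow> r i \<le> l j \<or> r j \<le> l i \<Longrightarrow> (\<Sum>i\<in>I. r i - l i) < \<delta> \<Longrightarrow>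
       (\<Sum>i\<in>I. norm (h (r i) - h (l i))) < \<eta>"
    and G: "open G" "G \<subseteq> {a<..<b}" "measure lebesgue G < \<delta>"
    and F: "F \<subseteq> components G" "finite F"
    and pq: "\<And>C. C \<in> F \<Longrightarrow> p C \<in> {Inf C..Sup C} \<and> q C \<in> {Inf C..Sup C}"
  shows "(\<Sum>C\<in>F. \<bar>h (q C) - h (p C)\<bar>) < \<eta>"
proof -
  note comp = component_of_open_subset_interval[OF G(1,2)]
  define l where "l C = min (p C) (q C)" for C
  define r where "r C = max (p C) (q C)" for C
  have lr: "Inf C \<le> l C" "l C \<le> r C" "r C \<le> Sup C" "norm (h (r C) - h (l C)) = \<bar>h (q C) - h (p C)\<bar>"
    if "C \<in> F" for C
    using pq[OF that] by (auto simp: l_def r_def max_def min_def abs_minus_commute)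
  have "(\<Sum>C\<in>F. norm (h (r C) - h (l C))) < \<eta>"
  proof (rule small[OF F(2)])
    show "\<forall>C\<in>F. a \<le> l C \<and> l C \<le> r C \<and> r C \<le> b"
    proof
      fix C assume "C \<in> F"
      with F(1) have "a \<le> Inf C" "Sup C \<le> b" using comp by blast+
      with lr[OF \<open>C \<in> F\<close>] show "a \<le> l C \<and> l C \<le> r C \<and> r C \<le> b" by linarith
    qed
    show "\<forall>C\<in>F. \<forall>D\<in>F. C \<noteq> D \<longrightarrow> r C \<le> l D \<or> r D \<le> l C"
    proof (intro ballI impI)
      fix C D assume "C \<in> F" "D \<in> F" "C \<noteq> D"
      with F(1) have CD: "C \<in> components G" "D \<in> components G" "C \<inter> D = {}"
        using components_nonoverlap[of C G D] by auto
      have "{Inf C<..<Sup C} = C" "{Inf D<..<Sup D} = D"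
        using comp(1) CD(1,2) by metis+
      with CD(3) have "{Inf C<..<Sup C} \<inter> {Inf D<..<Sup D} = {}"
        by simp
      then have "Sup C \<le> Inf D \<or> Sup D \<le> Inf C"
        using comp(2)[OF CD(1)] comp(2)[OF CD(2)] by (rule disjoint_Ioo_separated)
      with lr[OF \<open>C \<in> F\<close>] lr[OF \<open>D \<in> F\<close>] show "r C \<le> l D \<or> r D \<le> l C" by linarith
    qed
    have "(\<Sum>C\<in>F. r C - l C) \<le> (\<Sum>C\<in>F. Sup C - Inf C)"
      using lr by (intro sum_mono) (meson diff_mono)
    also have "\<dots> \<le> measure lebesgue G"
      by (rule sum_component_lengths_le_measure[OF G(1,2) F])
    finally show "(\<Sum>C\<in>F. r C - l C) < \<delta>"
      using G(3) by simp
  qed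
  then show ?thesis
    using lr(4) by simp
qed

lemma abs_cont_on_negligible_image:
  fixes h :: "real \<Rightarrow> real"
  assumes ac: "abs_cont_on h a b" and N: "negligible N" and N_sub: "N \<subseteq> {a<..<b}"
  shows "negligible (h ` N)"
  unfolding negligible_outer_le
proof (intro allI impI)
  fix \<eta> :: real assume "\<eta> > 0"
  then obtain \<delta> where "\<delta> > 0" and small: "\<And>(I :: real set set) l r. finite I \<Longrightarrow> \<forall>i\<in>I. a \<le> l i \<and> l i \<le> r i \<and> r i \<le> b \<Longrightarrow>
       \<forall>i\<in>I. \<forall>j\<in>I. i \<noteq> j \<longrightarrow> r i \<le> l j \<or> r j \<le> l i \<Longrightarrow> (\<Sum>i\<in>I. r i - l i) < \<delta> \<Longrightarrow>
       (\<Sum>i\<in>I. norm (h (r i) - h (l i))) < \<eta>"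
    by (rule abs_cont_on_finite_familyE[OF ac]) (rule that)
  obtain G where G: "open G" "N \<subseteq> G" "G \<subseteq> {a<..<b}" and G_small: "measure lebesgue G < \<delta>"
    using negligible_open_cover[OF N N_sub \<open>\<delta> > 0\<close>] by blast
  define \<C> where "\<C> = components G"
  note comp = component_of_open_subset_interval[OF G(1,3), folded \<C>_def]
  have cnt: "countable \<C>"
    using open_components[OF G(1)] components_nonoverlap[of _ G]
    by (intro countable_disjoint_open_subsets) (auto simp: \<C>_def pairwise_def disjnt_def)
  define p where "p C = (SOME t. t \<in> {Inf C..Sup C} \<and> (\<forall>s\<in>{Inf C..Sup C}. h t \<le> h s))" for C
  define q where "q C = (SOME t. t \<in> {Inf C..Sup C} \<and> (\<forall>s\<in>{Inf C..Sup C}. h s \<le> h t))" for C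
  have pq: "p C \<in> {Inf C..Sup C} \<and> q C \<in> {Inf C..Sup C} \<and> (\<forall>s\<in>{Inf C..Sup C}. h (p C) \<le> h s \<and> h s \<le> h (q C))"
    if "C \<in> \<C>" for C
  proof -
    have "{Inf C..Sup C} \<subseteq> {a..b}"
      using comp[OF that] by auto
    then have "continuous_on {Inf C..Sup C} h"
      using abs_cont_on_imp_continuous_on[OF ac] continuous_on_subset by blast
    moreover have "{Inf C..Sup C} \<noteq> {}"
      using comp(2)[OF that] by simp
    ultimately have min: "\<exists>t. t \<in> {Inf C..Sup C} \<and> (\<forall>s\<in>{Inf C..Sup C}. h t \<le> h s)"
      and max: "\<exists>t. t \<in> {Inf C..Sup C} \<and> (\<forall>s\<in>{Inf C..Sup C}. h s \<le> h t)"
      using continuous_attains_inf[OF compact_Icc] continuous_attains_sup[OF compact_Icc] by blast+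
    show ?thesis
      using someI_ex[OF min] someI_ex[OF max] unfolding p_def q_def by blast
  qed
  define T where "T C = {h (p C)..h (q C)}" for C
  have cover: "h ` N \<subseteq> (\<Union>C\<in>\<C>. T C)"
  proof
    fix y assume "y \<in> h ` N"
    then obtain t where "t \<in> N" "y = h t" by blast
    then have "t \<in> \<Union>\<C>" using G(2) by (simp add: \<C>_def Union_components subsetD)
    then obtain C where C: "C \<in> \<C>" "t \<in> C" by blast
    then have "t \<in> {Inf C<..<Sup C}" using comp(1)[OF C(1)] by blast
    then have "t \<in> {Inf C..Sup C}" by simp
    with pq[OF C(1)] C(1) \<open>y = h t\<close> show "y \<in> (\<Union>C\<in>\<C>. T C)" by (auto simp: T_def)
  qed
  have bound: "measure lebesgue (\<Union>C\<in>F. T C) \<le> \<eta>" if F: "F \<subseteq> \<C>" "finite F" for F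
  proof -
    have "measure lebesgue (\<Union>C\<in>F. T C) \<le> (\<Sum>C\<in>F. measure lebesgue (T C))"
      using F(2) by (intro measure_UNION_le) (auto simp: T_def)
    also have "\<dots> = (\<Sum>C\<in>F. \<bar>h (q C) - h (p C)\<bar>)"
      using pq F(1) by (intro sum.cong) (auto simp: T_def measure_completion)
    also have "\<dots> < \<eta>"
      using small G G_small F pq by (intro components_oscillation_small[where p = p]) (auto simp: \<C>_def)
    finally show ?thesis by simp
  qed
  have "T C \<in> fmeasurable lebesgue" for C
    by (simp add: T_def)
  then show "\<exists>T. h ` N \<subseteq> T \<and> T \<in> lmeasurable \<and> measure lebesgue T \<le> \<eta>"
    using cover fmeasurable_UN_bound[OF cnt _ bound] measure_UN_bound[OF cnt _ bound] by blast
qed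

lemma continuous_on_last_point_ge:
  fixes h :: "real \<Rightarrow> real"
  assumes "continuous_on {a..b} h" "a \<le> b" "c \<le> h a"
  shows "\<exists>s\<in>{a..b}. c \<le> h s \<and> (\<forall>t\<in>{s<..<b}. h t < c)"
proof -
  define B where "B = {t \<in> {a..b}. c \<le> h t}"
  have "closed B"
    unfolding B_def using assms(1) by (intro continuous_on_closed_Collect_le) auto
  moreover have "B \<noteq> {}" "bdd_above B"
    using assms(2,3) by (auto simp: B_def intro!: bdd_aboveI[of _ b])
  ultimately have "Sup B \<in> B"
    by (rule closed_contains_Sup[rotated -1])
  moreover have "h t < c" if "t \<in> {Sup B<..<b}" for t
    using that cSup_upper[OF _ \<open>bdd_above B\<close>, of t] \<open>Sup B \<in> B\<close> by (force simp: B_def)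
  ultimately show ?thesis
    by (auto simp: B_def)
qed

lemma continuous_on_first_point_ge:
  fixes h :: "real \<Rightarrow> real"
  assumes "continuous_on {a..b} h" "a \<le> b" "c \<le> h b"
  shows "\<exists>s\<in>{a..b}. c \<le> h s \<and> (\<forall>t\<in>{a<..<s}. h t < c)"
proof -
  define B where "B = {t \<in> {a..b}. c \<le> h t}"
  have "closed B"
    unfolding B_def using assms(1) by (intro continuous_on_closed_Collect_le) auto
  moreover have "B \<noteq> {}" "bdd_below B"
    using assms(2,3) by (auto simp: B_def intro!: bdd_belowI[of _ a])
  ultimately have "Inf B \<in> B"
    by (rule closed_contains_Inf[rotated -1])
  moreover have "h t < c" if "t \<in> {a<..<Inf B}" for t
    using that cInf_lower[OF _ \<open>bdd_below B\<close>, of t] \<open>Inf B \<in> B\<close> by (force simp: B_def)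
  ultimately show ?thesis
    by (auto simp: B_def)
qed

definition right_dini_ge :: "(real \<Rightarrow> real) \<Rightarrow> real \<Rightarrow> real \<Rightarrow> bool" where
  "right_dini_ge g t d \<longleftrightarrow> (\<forall>\<epsilon>>0. \<exists>\<delta>>0. \<forall>s. t < s \<and> s < t + \<delta> \<longrightarrow> g t + (d - \<epsilon>) * (s - t) \<le> g s)"

lemma continuous_on_last_crossing:
  fixes k :: "real \<Rightarrow> real"
  assumes "continuous_on {a..b} k" "a \<le> b" "k b < c" "c < k a"
  obtains s where "a < s" "s < b" "k s = c" "\<forall>t\<in>{s<..<b}. k t < c"
proof -
  obtain s where s: "s \<in> {a..b}" "c \<le> k s" and below: "\<forall>t\<in>{s<..<b}. k t < c"
    using continuous_on_last_point_ge[OF assms(1,2), of c] assms(4) by auto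
  have "s < b" using s assms(3) by (cases "s = b") auto
  have "k s \<le> c"
  proof (rule tendsto_upperbound)
    show "(k \<longlongrightarrow> k s) (at_right s)"
      using continuous_on_subset[OF assms(1), of "{s..b}"] s \<open>s < b\<close>
      by (intro continuous_on_Icc_at_rightD) auto
    show "\<forall>\<^sub>F t in at_right s. k t \<le> c"
      unfolding eventually_at_right_field using below \<open>s < b\<close> by (intro exI[of _ b]) (auto intro: less_imp_le)
  qed simp
  with s have "k s = c" by simp
  moreover from this have "a < s"
    using assms(4) s by (cases "s = a") auto
  ultimately show thesis
    using that \<open>s < b\<close> below by blast
qed

lemma right_dini_ge_add_linear:
  assumes "right_dini_ge g t d"
  shows "right_dini_ge (\<lambda>s. g s + \<epsilon> * (s - a)) t (d + \<epsilon>)"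
  unfolding right_dini_ge_def
proof (intro allI impI)
  fix \<epsilon>' :: real assume "\<epsilon>' > 0"
  with assms obtain \<delta> where "\<delta> > 0" and grow: "\<forall>s. t < s \<and> s < t + \<delta> \<longrightarrow> g t + (d - \<epsilon>') * (s - t) \<le> g s"
    unfolding right_dini_ge_def by blast
  have "g t + \<epsilon> * (t - a) + (d + \<epsilon> - \<epsilon>') * (s - t) = (g t + (d - \<epsilon>') * (s - t)) + \<epsilon> * (s - a)" for s
    by (simp add: algebra_simps)
  with \<open>\<delta> > 0\<close> grow show "\<exists>\<delta>>0. \<forall>s. t < s \<and> s < t + \<delta> \<longrightarrow>
      g t + \<epsilon> * (t - a) + (d + \<epsilon> - \<epsilon>') * (s - t) \<le> g s + \<epsilon> * (s - a)"
    by (metis add_le_cancel_right)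
qed

lemma right_dini_ge_pos_imp_increasing:
  assumes "right_dini_ge g t d" "d > 0"
  obtains \<delta> where "\<delta> > 0" "\<And>s. t < s \<Longrightarrow> s < t + \<delta> \<Longrightarrow> g t < g s"
proof -
  obtain \<delta> where "\<delta> > 0" and grow: "\<And>s. t < s \<Longrightarrow> s < t + \<delta> \<Longrightarrow> g t + (d - d / 2) * (s - t) \<le> g s"
    using assms(1)[unfolded right_dini_ge_def, rule_format, of "d / 2"] assms(2) by auto
  have "g t < g s" if "t < s" "s < t + \<delta>" for s
  proof -
    have "0 < (d - d / 2) * (s - t)"
      using that assms(2) by simp
    with grow[OF that] show ?thesis by linarith
  qed
  with \<open>\<delta> > 0\<close> show thesis by (rule that)
qed

lemma abs_cont_on_add_linear:
  fixes g :: "real \<Rightarrow> real"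
  assumes "abs_cont_on g a b" "\<epsilon> \<ge> 0"
  shows "abs_cont_on (\<lambda>t. g t + \<epsilon> * (t - a)) a b"
proof (rule abs_cont_on_lipschitz_wrt[OF assms(1), of "max 1 \<epsilon>"])
  fix s t
  have "g s + \<epsilon> * (s - a) - (g t + \<epsilon> * (t - a)) = (g s - g t) + \<epsilon> * (s - t)"
    by (simp add: algebra_simps)
  then have "\<bar>g s + \<epsilon> * (s - a) - (g t + \<epsilon> * (t - a))\<bar> \<le> \<bar>g s - g t\<bar> + \<epsilon> * \<bar>s - t\<bar>"
    using abs_triangle_ineq[of "g s - g t" "\<epsilon> * (s - t)"] assms(2) by (simp add: abs_mult)
  also have "\<dots> \<le> max 1 \<epsilon> * (\<bar>s - t\<bar> + norm (g s - g t))"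
    using mult_right_mono[of 1 "max 1 \<epsilon>" "\<bar>g s - g t\<bar>"] mult_right_mono[of \<epsilon> "max 1 \<epsilon>" "\<bar>s - t\<bar>"]
    by (simp add: distrib_left)
  finally show "\<bar>g s + \<epsilon> * (s - a) - (g t + \<epsilon> * (t - a))\<bar> \<le> max 1 \<epsilon> * (\<bar>s - t\<bar> + norm (g s - g t))" .
qed simp

lemma abs_cont_on_mono_right_dini:
  fixes g :: "real \<Rightarrow> real"
  assumes ac: "abs_cont_on g a b" and "a \<le> b" and N: "negligible N"
    and dini: "\<And>t. t \<in> {a<..<b} \<Longrightarrow> t \<notin> N \<Longrightarrow> right_dini_ge g t 0"
  shows "g a \<le> g b"
proof (rule ccontr)
  assume "\<not> g a \<le> g b"
  then have "g b < g a" by simp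
  with \<open>a \<le> b\<close> have "a < b" by (cases "a = b") auto
  define \<epsilon> where "\<epsilon> = (g a - g b) / (2 * (b - a))"
  have "\<epsilon> > 0" using \<open>a < b\<close> \<open>g b < g a\<close> by (simp add: \<epsilon>_def)
  define k where "k t = g t + \<epsilon> * (t - a)" for t
  have "\<epsilon> * (b - a) = (g a - g b) / 2"
    using \<open>a < b\<close> by (simp add: \<epsilon>_def field_simps)
  then have "k b < k a"
    using \<open>g b < g a\<close> by (simp add: k_def)
  have k_ac: "abs_cont_on k a b"
    unfolding k_def[abs_def] using ac \<open>\<epsilon> > 0\<close> by (intro abs_cont_on_add_linear) auto
  have "{k b<..<k a} \<subseteq> k ` (N \<inter> {a<..<b})"
  proof
    fix c assume "c \<in> {k b<..<k a}"
    then obtain s where s: "a < s" "s < b" "k s = c" and below: "\<forall>t\<in>{s<..<b}. k t < c"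
      using continuous_on_last_crossing[OF abs_cont_on_imp_continuous_on[OF k_ac] \<open>a \<le> b\<close>] by auto
    have "s \<in> N"
    proof (rule ccontr)
      assume "s \<notin> N"
      with dini s have dini_k: "right_dini_ge k s \<epsilon>"
        using right_dini_ge_add_linear[of g s 0 \<epsilon> a] by (simp add: k_def[abs_def])
      obtain \<delta> where "\<delta> > 0" and up: "\<And>t. s < t \<Longrightarrow> t < s + \<delta> \<Longrightarrow> k s < k t"
        by (rule right_dini_ge_pos_imp_increasing[OF dini_k \<open>\<epsilon> > 0\<close>]) (rule that)
      define t where "t = s + min \<delta> (b - s) / 2"
      have "s < t" "t < s + \<delta>" "t < b"
        using \<open>\<delta> > 0\<close> s by (auto simp: t_def min_def field_simps)
      then have "k s < k t" "k t < c"
        using up below by auto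
      with \<open>k s = c\<close> show False by simp
    qed
    with s show "c \<in> k ` (N \<inter> {a<..<b})" by force
  qed
  moreover have "negligible (k ` (N \<inter> {a<..<b}))"
    using N negligible_Int by (intro abs_cont_on_negligible_image[OF k_ac]) auto
  ultimately have "negligible {k b<..<k a}"
    using negligible_subset by blast
  with \<open>k b < k a\<close> show False
    using negligible_interval(2)[of "k b" "k a"] by (simp add: box_real)
qed

lemma has_real_derivative_imp_right_dini_ge:
  assumes "(g has_real_derivative d) (at t within {t..})"
  shows "right_dini_ge g t d"
  unfolding right_dini_ge_def
proof (intro allI impI)
  fix \<epsilon> :: real assume "\<epsilon> > 0"
  have "((\<lambda>s. (g s - g t) / (s - t)) \<longlongrightarrow> d) (at t within {t..})"
    using assms has_field_derivative_iff by blast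
  then have "\<forall>\<^sub>F s in at t within {t..}. dist ((g s - g t) / (s - t)) d < \<epsilon>"
    using \<open>\<epsilon> > 0\<close> unfolding tendsto_iff by blast
  then obtain \<delta> where "\<delta> > 0" and
    close: "\<And>s. s \<in> {t..} \<Longrightarrow> s \<noteq> t \<Longrightarrow> dist s t < \<delta> \<Longrightarrow> dist ((g s - g t) / (s - t)) d < \<epsilon>"
    unfolding eventually_at by blast
  show "\<exists>\<delta>>0. \<forall>s. t < s \<and> s < t + \<delta> \<longrightarrow> g t + (d - \<epsilon>) * (s - t) \<le> g s"
  proof (intro exI[of _ \<delta>] conjI allI impI \<open>\<delta> > 0\<close>)
    fix s assume s: "t < s \<and> s < t + \<delta>"
    then have "d - \<epsilon> < (g s - g t) / (s - t)"
      using close[of s] by (simp add: dist_real_def abs_less_iff)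
    with s show "g t + (d - \<epsilon>) * (s - t) \<le> g s"
      by (simp add: pos_less_divide_eq)
  qed
qed

lemma right_dini_ge_le:
  assumes "right_dini_ge g t d" "d' \<le> d"
  shows "right_dini_ge g t d'"
  unfolding right_dini_ge_def
proof (intro allI impI)
  fix \<epsilon> :: real assume "\<epsilon> > 0"
  with assms(1) obtain \<delta> where "\<delta> > 0" and "\<forall>s. t < s \<and> s < t + \<delta> \<longrightarrow> g t + (d - \<epsilon>) * (s - t) \<le> g s"
    unfolding right_dini_ge_def by blast
  moreover have "(d' - \<epsilon>) * (s - t) \<le> (d - \<epsilon>) * (s - t)" if "t < s" for s
    using that assms(2) by (intro mult_right_mono) auto
  ultimately show "\<exists>\<delta>>0. \<forall>s. t < s \<and> s < t + \<delta> \<longrightarrow> g t + (d' - \<epsilon>) * (s - t) \<le> g s"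
    by (meson add_left_mono order_trans)
qed

lemma right_dini_ge_minorant:
  assumes "right_dini_ge f t d" "\<And>s. f s \<le> g s" "f t = g t"
  shows "right_dini_ge g t d"
  using assms unfolding right_dini_ge_def by (metis order_trans)

lemma right_dini_ge_from_minorant_derivative:
  assumes "(f has_real_derivative d) (at t within {0..})" "0 \<le> t" "0 \<le> d"
    "\<And>s. f s \<le> g s" "f t = g t"
  shows "right_dini_ge g t 0"
proof -
  have "(f has_real_derivative d) (at t within {t..})"
    using has_field_derivative_subset[OF assms(1)] assms(2) by auto
  then show ?thesis
    using assms(3-5) by (meson has_real_derivative_imp_right_dini_ge right_dini_ge_le right_dini_ge_minorant)
qed

lemma exp_lipschitz_on:
  fixes s t T :: real
  assumes "s \<in> {0..T}" "t \<in> {0..T}"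
  shows "\<bar>exp s - exp t\<bar> \<le> exp T * \<bar>s - t\<bar>"
proof -
  have "exp q - exp p \<le> exp T * (q - p)" if "p \<le> q" "q \<le> T" for p q :: real
  proof -
    have "exp q * (1 + (p - q)) \<le> exp q * exp (p - q)"
      by (intro mult_left_mono exp_ge_add_one_self) auto
    then have "exp q - exp p \<le> exp q * (q - p)"
      by (simp add: exp_diff algebra_simps)
    also have "\<dots> \<le> exp T * (q - p)"
      using that by (intro mult_right_mono) auto
    finally show ?thesis .
  qed
  from this[of s t] this[of t s] assms show ?thesis
    by (cases "s \<le> t") (auto simp: abs_if)
qed

section \<open>Best-reply trajectories\<close>

lemma UNIV_7: "(UNIV :: 7 set) = {1, 2, 3, 4, 5, 6, 7}"
proof -
  have "i \<in> {1, 2, 3, 4, 5, 6, 7}" for i :: 7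
  proof (cases i rule: bit1_cases)
    case (of_int z)
    then have "z < 7" by simp
    with of_int have "z = 0 \<or> z = 1 \<or> z = 2 \<or> z = 3 \<or> z = 4 \<or> z = 5 \<or> z = 6" by arith
    with of_int show ?thesis by auto
  qed
  then show ?thesis by auto
qed

lemma sum_UNIV_7: "(\<Sum>i\<in>UNIV. f (i :: 7)) = f 1 + f 2 + f 3 + f 4 + f 5 + f 6 + f 7"
  unfolding UNIV_7 by simp (simp only: add.assoc)

lemma BR_pos_imp_best:
  assumes y: "y \<in> BR U v" and pos: "0 < y $ k"
  shows "(U *v v) $ j \<le> (U *v v) $ k"
proof (rule ccontr)
  assume "\<not> (U *v v) $ j \<le> (U *v v) $ k"
  then have less: "(U *v v) $ k < (U *v v) $ j" by simp
  then have "j \<noteq> k" by auto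
  have y_simplex: "y \<in> simplex7" and y_max: "\<forall>z\<in>simplex7. z \<bullet> (U *v v) \<le> y \<bullet> (U *v v)"
    using y by (auto simp: BR_def)
  \<comment> \<open>moving the weight of \<open>k\<close> to \<open>j\<close> would increase the payoff\<close>
  define z where "z = y + (y $ k) *\<^sub>R (axis j 1 - axis k 1)"
  have z_nth: "z $ i = y $ i + y $ k * ((if i = j then 1 else 0) - (if i = k then 1 else 0))" for i
    by (simp add: z_def axis_def)
  have "z \<in> simplex7"
    unfolding simplex7_def
  proof (intro CollectI conjI allI)
    show "0 \<le> z $ i" for i
      using y_simplex pos \<open>j \<noteq> k\<close> unfolding z_nth simplex7_def by auto
    have axis: "(\<Sum>i\<in>UNIV. axis m (1::real) $ i) = 1" for m
      by (simp add: axis_def)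
    show "(\<Sum>i\<in>UNIV. z $ i) = 1"
      using y_simplex by (simp add: z_def sum.distrib sum_subtractf sum_distrib_left[symmetric] simplex7_def axis)
  qed
  moreover have "z \<bullet> (U *v v) = y \<bullet> (U *v v) + y $ k * ((U *v v) $ j - (U *v v) $ k)"
    by (simp add: z_def inner_add_left inner_diff_left inner_axis' algebra_simps)
  moreover have "y $ k * ((U *v v) $ j - (U *v v) $ k) > 0"
    using pos less by simp
  ultimately show False
    using y_max by fastforce
qed

locale br_trajectory =
  fixes U :: "real^7^7" and x :: "real \<Rightarrow> real^7"
  assumes solution: "BR_solution U x"
begin

lemma in_simplex: "0 \<le> t \<Longrightarrow> x t \<in> simplex7"
  using solution by (simp add: BR_solution_def)

lemma coord_nonneg: "0 \<le> t \<Longrightarrow> 0 \<le> x t $ i"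
  using in_simplex by (simp add: simplex7_def)

lemma coord_le_1: "0 \<le> t \<Longrightarrow> x t $ i \<le> 1"
  using in_simplex[of t] coord_nonneg[of t] member_le_sum[of i UNIV "\<lambda>j. x t $ j"]
  by (simp add: simplex7_def)

definition replies :: "real \<Rightarrow> real^7 \<Rightarrow> bool" where
  "replies t y \<longleftrightarrow> y \<in> BR U (x t) \<and> (x has_vector_derivative (y - x t)) (at t within {0..})"

lemma ae_replies: "\<exists>N. negligible N \<and> (\<forall>t\<ge>0. t \<notin> N \<longrightarrow> (\<exists>y. replies t y))"
proof -
  have "AE t in lebesgue. t \<ge> 0 \<longrightarrow>
        (\<exists>v. (x has_vector_derivative v) (at t within {0..}) \<and> v \<in> (\<lambda>y. y - x t) ` BR U (x t))"
    using solution by (intro AE_completion) (simp add: BR_solution_def)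
  then obtain N where "negligible N" and "{t. \<not> (t \<ge> 0 \<longrightarrow>
        (\<exists>v. (x has_vector_derivative v) (at t within {0..}) \<and> v \<in> (\<lambda>y. y - x t) ` BR U (x t)))} \<subseteq> N"
    unfolding eventually_ae_filter_negligible by blast
  then show ?thesis
    unfolding replies_def by blast
qed

lemma replies_nonneg: "replies t y \<Longrightarrow> 0 \<le> y $ i"
  by (auto simp: replies_def BR_def simplex7_def)

text \<open>Such functions inherit absolute continuity from the trajectory, so they are monotone as soon
  as their lower right Dini derivative is nonnegative at almost all times.\<close>
definition state_lipschitz :: "(real \<Rightarrow> real) \<Rightarrow> bool" where
  "state_lipschitz g \<longleftrightarrow>
     (\<forall>T\<ge>0. \<exists>L\<ge>0. \<forall>s\<in>{0..T}. \<forall>t\<in>{0..T}. \<bar>g s - g t\<bar> \<le> L * (\<bar>s - t\<bar> + norm (x s - x t)))"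

lemma state_lipschitzE:
  assumes "state_lipschitz g" "0 \<le> T"
  obtains L where "L \<ge> 0" "\<And>s t. s \<in> {0..T} \<Longrightarrow> t \<in> {0..T} \<Longrightarrow> \<bar>g s - g t\<bar> \<le> L * (\<bar>s - t\<bar> + norm (x s - x t))"
  using assms unfolding state_lipschitz_def by blast

lemma state_lipschitz_abs_cont:
  assumes "state_lipschitz g" "0 \<le> u" "u \<le> v"
  shows "abs_cont_on g u v"
proof -
  obtain L where "L \<ge> 0" and L: "\<And>s t. s \<in> {0..v} \<Longrightarrow> t \<in> {0..v} \<Longrightarrow> \<bar>g s - g t\<bar> \<le> L * (\<bar>s - t\<bar> + norm (x s - x t))"
    using state_lipschitzE[OF assms(1), of v] assms(2,3) by auto
  have "abs_cont_on x u v"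
    using solution assms(2,3) abs_cont_on_subinterval[of x 0 v u v] by (simp add: BR_solution_def)
  then show ?thesis
    using L assms(2) by (intro abs_cont_on_lipschitz_wrt[OF _ \<open>L \<ge> 0\<close>]) auto
qed

lemma state_lipschitz_dominated:
  assumes f: "state_lipschitz f" and g: "state_lipschitz g" and "a \<ge> 0" "b \<ge> 0"
    and dom: "\<And>s t. \<bar>h s - h t\<bar> \<le> a * \<bar>f s - f t\<bar> + b * \<bar>g s - g t\<bar>"
  shows "state_lipschitz h"
  unfolding state_lipschitz_def
proof (intro allI impI)
  fix T :: real assume "0 \<le> T"
  obtain L1 L2 where "L1 \<ge> 0" "L2 \<ge> 0"
    and L1: "\<And>s t. s \<in> {0..T} \<Longrightarrow> t \<in> {0..T} \<Longrightarrow> \<bar>f s - f t\<bar> \<le> L1 * (\<bar>s - t\<bar> + norm (x s - x t))"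
    and L2: "\<And>s t. s \<in> {0..T} \<Longrightarrow> t \<in> {0..T} \<Longrightarrow> \<bar>g s - g t\<bar> \<le> L2 * (\<bar>s - t\<bar> + norm (x s - x t))"
    using state_lipschitzE[OF f \<open>0 \<le> T\<close>] state_lipschitzE[OF g \<open>0 \<le> T\<close>] by metis
  show "\<exists>L\<ge>0. \<forall>s\<in>{0..T}. \<forall>t\<in>{0..T}. \<bar>h s - h t\<bar> \<le> L * (\<bar>s - t\<bar> + norm (x s - x t))"
  proof (intro exI[of _ "a * L1 + b * L2"] conjI ballI)
    fix s t assume "s \<in> {0..T}" "t \<in> {0..T}"
    then have "a * \<bar>f s - f t\<bar> + b * \<bar>g s - g t\<bar> \<le>
        a * (L1 * (\<bar>s - t\<bar> + norm (x s - x t))) + b * (L2 * (\<bar>s - t\<bar> + norm (x s - x t)))"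
      using L1 L2 \<open>a \<ge> 0\<close> \<open>b \<ge> 0\<close> by (intro add_mono mult_left_mono) auto
    with dom[of s t] show "\<bar>h s - h t\<bar> \<le> (a * L1 + b * L2) * (\<bar>s - t\<bar> + norm (x s - x t))"
      by (simp add: algebra_simps)
  qed (use \<open>L1 \<ge> 0\<close> \<open>L2 \<ge> 0\<close> \<open>a \<ge> 0\<close> \<open>b \<ge> 0\<close> in simp)
qed

lemma state_lipschitz_linear:
  assumes "state_lipschitz f" "state_lipschitz g"
  shows "state_lipschitz (\<lambda>t. a * f t + b * g t)"
proof (rule state_lipschitz_dominated[OF assms abs_ge_zero abs_ge_zero])
  fix s t
  have "\<bar>a * f s + b * g s - (a * f t + b * g t)\<bar> = \<bar>a * (f s - f t) + b * (g s - g t)\<bar>"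
    by (simp add: algebra_simps)
  also have "\<dots> \<le> \<bar>a\<bar> * \<bar>f s - f t\<bar> + \<bar>b\<bar> * \<bar>g s - g t\<bar>"
    by (metis abs_mult abs_triangle_ineq)
  finally show "\<bar>a * f s + b * g s - (a * f t + b * g t)\<bar> \<le> \<bar>a\<bar> * \<bar>f s - f t\<bar> + \<bar>b\<bar> * \<bar>g s - g t\<bar>" .
qed

lemma state_lipschitz_max:
  assumes "state_lipschitz f" "state_lipschitz g"
  shows "state_lipschitz (\<lambda>t. max (f t) (g t))"
  by (rule state_lipschitz_dominated[OF assms zero_le_one zero_le_one]) (auto simp: max_def abs_if)

lemma state_lipschitz_mono:
  assumes "state_lipschitz g" "0 \<le> u" "u \<le> v"
    and dini: "\<And>t y. u < t \<Longrightarrow> t < v \<Longrightarrow> replies t y \<Longrightarrow> right_dini_ge g t 0"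
  shows "g u \<le> g v"
proof -
  obtain N where "negligible N" and N: "\<And>t. 0 \<le> t \<Longrightarrow> t \<notin> N \<Longrightarrow> \<exists>y. replies t y"
    using ae_replies by blast
  show ?thesis
  proof (rule abs_cont_on_mono_right_dini[OF state_lipschitz_abs_cont[OF assms(1-3)] \<open>u \<le> v\<close> \<open>negligible N\<close>])
    fix t assume "t \<in> {u<..<v}" "t \<notin> N"
    then show "right_dini_ge g t 0"
      using N[of t] dini[of t] \<open>0 \<le> u\<close> by auto
  qed
qed

text \<open>Rescaled frequencies: as \<open>x' = y - x\<close> for the reply \<open>y\<close>, \<open>z i\<close> has derivative \<open>exp t * y $ i \<ge> 0\<close>.\<close>
definition z :: "7 \<Rightarrow> real \<Rightarrow> real" where
  "z i t = exp t * x t $ i"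

lemma state_lipschitz_continuous_on:
  assumes "state_lipschitz g" "0 \<le> u" "u \<le> v"
  shows "continuous_on {u..v} g"
  by (rule abs_cont_on_imp_continuous_on[OF state_lipschitz_abs_cont[OF assms]])

lemma z_nonneg: "0 \<le> t \<Longrightarrow> 0 \<le> z i t"
  by (simp add: z_def coord_nonneg)

lemma z_has_derivative:
  assumes "replies t y"
  shows "(z i has_real_derivative exp t * y $ i) (at t within {0..})"
proof -
  have "(x has_vector_derivative (y - x t)) (at t within {0..})"
    using assms by (simp add: replies_def)
  then have "((\<lambda>s. x s $ i) has_vector_derivative (y - x t) $ i) (at t within {0..})"
    by (rule bounded_linear.has_vector_derivative[OF bounded_linear_vec_nth])
  then have "((\<lambda>s. x s $ i) has_real_derivative (y - x t) $ i) (at t within {0..})"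
    by (simp add: has_real_derivative_iff_has_vector_derivative)
  from DERIV_mult[OF DERIV_exp[THEN has_field_derivative_at_within] this]
  show ?thesis
    by (simp add: z_def[abs_def] algebra_simps)
qed

lemma state_lipschitz_z: "state_lipschitz (z i)"
  unfolding state_lipschitz_def
proof (intro allI impI)
  fix T :: real assume "0 \<le> T"
  show "\<exists>L\<ge>0. \<forall>s\<in>{0..T}. \<forall>t\<in>{0..T}. \<bar>z i s - z i t\<bar> \<le> L * (\<bar>s - t\<bar> + norm (x s - x t))"
  proof (intro exI[of _ "exp T"] conjI ballI)
    fix s t assume st: "s \<in> {0..T}" "t \<in> {0..T}"
    have "z i s - z i t = (exp s - exp t) * x s $ i + exp t * (x s $ i - x t $ i)"
      by (simp add: z_def algebra_simps)
    then have "\<bar>z i s - z i t\<bar> \<le> \<bar>exp s - exp t\<bar> * \<bar>x s $ i\<bar> + exp t * \<bar>x s $ i - x t $ i\<bar>"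
      by (metis abs_mult abs_triangle_ineq abs_exp_cancel)
    also have "\<dots> \<le> exp T * \<bar>s - t\<bar> * 1 + exp T * norm (x s - x t)"
    proof (rule add_mono)
      show "\<bar>exp s - exp t\<bar> * \<bar>x s $ i\<bar> \<le> exp T * \<bar>s - t\<bar> * 1"
        using exp_lipschitz_on[OF st] coord_nonneg[of s i] coord_le_1[of s i] st by (intro mult_mono) auto
      show "exp t * \<bar>x s $ i - x t $ i\<bar> \<le> exp T * norm (x s - x t)"
        using component_le_norm_cart[of "x s - x t" i] st by (intro mult_mono) auto
    qed
    finally show "\<bar>z i s - z i t\<bar> \<le> exp T * (\<bar>s - t\<bar> + norm (x s - x t))"
      by (simp add: distrib_left)
  qed simp
qed

lemma z_mono:
  assumes "0 \<le> u" "u \<le> v"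
  shows "z i u \<le> z i v"
proof (rule state_lipschitz_mono[OF state_lipschitz_z assms])
  fix t y assume "u < t" "t < v" "replies t y"
  then show "right_dini_ge (z i) t 0"
    using \<open>0 \<le> u\<close> replies_nonneg[of t y i]
    by (intro right_dini_ge_from_minorant_derivative[OF z_has_derivative]) auto
qed

lemma z_const_if_not_best:
  assumes "0 \<le> u" "u \<le> v" and not_best: "\<And>\<tau>. u < \<tau> \<Longrightarrow> \<tau> < v \<Longrightarrow> \<exists>j. (U *v x \<tau>) $ i < (U *v x \<tau>) $ j"
  shows "z i v = z i u"
proof -
  have "- z i u \<le> - z i v"
  proof (rule state_lipschitz_mono[OF _ assms(1,2)])
    show "state_lipschitz (\<lambda>t. - z i t)"
      using state_lipschitz_linear[OF state_lipschitz_z state_lipschitz_z, of "-1" i 0 i] by simp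
    fix t y assume t: "u < t" "t < v" and "replies t y"
    then have "y $ i = 0"
      using not_best[OF t] BR_pos_imp_best replies_nonneg unfolding replies_def
      by (metis less_eq_real_def not_le)
    then have "((\<lambda>s. - z i s) has_real_derivative 0) (at t within {0..})"
      using DERIV_minus[OF z_has_derivative[OF \<open>replies t y\<close>, of i]] by simp
    then show "right_dini_ge (\<lambda>s. - z i s) t 0"
      using t \<open>0 \<le> u\<close> by (intro right_dini_ge_from_minorant_derivative[where d = 0]) auto
  qed
  with z_mono[OF assms(1,2), of i] show ?thesis by simp
qed

end

section \<open>Rock--paper--scissors blocks\<close>

lemma UNIV_3: "(UNIV :: 3 set) = {1, 2, 3}"
  using exhaust_3 by auto

lemma sum_UNIV_3: "(\<Sum>k\<in>UNIV. f (k :: 3)) = f 1 + f 2 + f 3"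
  unfolding UNIV_3 by simp (simp only: add.assoc)

lemma numeral_3_reduce [simp]: "(4 :: 3) = 1" "(5 :: 3) = 2"
  by simp_all

lemma three_cases: "(j :: 3) = k \<or> j = k + 1 \<or> j = k + 2"
  using exhaust_3[of j] exhaust_3[of k] by auto

lemma add_3_simps [simp]:
  "(k :: 3) + 1 + 1 = k + 2" "k + 1 + 2 = k" "k + 2 + 1 = k" "k + 2 + 2 = k + 1" "k + 3 = k"
  "k + 1 \<noteq> k" "k + 2 \<noteq> k"
  using exhaust_3[of k] by auto

lemma sum_UNIV_3_rotate: "(\<Sum>j\<in>UNIV. g (j :: 3)) = g k + g (k + 1) + g (k + 2)"
proof -
  have U: "(UNIV :: 3 set) = {k, k + 1, k + 2}"
    using three_cases by blast
  have "k + 1 \<noteq> k + 2"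
    by simp
  then show ?thesis
    unfolding U by simp (simp only: add.assoc)
qed

lemma sum_UNIV_shift:
  fixes g :: "'a::{finite, ab_group_add} \<Rightarrow> 'b::comm_monoid_add"
  shows "(\<Sum>k\<in>UNIV. g (k + c)) = (\<Sum>k\<in>UNIV. g k)"
  by (rule sum.reindex_bij_witness[of _ "\<lambda>k. k - c" "\<lambda>k. k + c"]) auto

lemma rps_equal_payoffs_imp_equal:
  fixes e a1 a2 a3 :: real
  assumes "- a2 + e * a3 = - a3 + e * a1" "- a3 + e * a1 = - a1 + e * a2"
  shows "a1 = a2 \<and> a2 = a3"
proof -
  have "(a2 - a1) * (1 + e + e\<^sup>2) = (1 + e) * (a3 - (1 + e) * a1 + e * a2) - ((1 + e) * a3 - e * a1 - a2)"
    by (simp add: power2_eq_square algebra_simps)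
  also have "\<dots> = 0"
    using assms by (simp add: algebra_simps)
  finally have "(a2 - a1) * (1 + e + e\<^sup>2) = 0" .
  moreover have "1 + e + e\<^sup>2 = (e + 1 / 2)\<^sup>2 + 3 / 4"
    by (simp add: power2_eq_square field_simps)
  then have "0 < 1 + e + e\<^sup>2"
    by (metis add_nonneg_pos zero_le_power2 zero_less_divide_iff zero_less_numeral)
  ultimately have "a2 = a1" by simp
  with assms show ?thesis by (simp add: algebra_simps)
qed

text \<open>Strategies \<open>s 1, s 2, s 3\<close> play rock--paper--scissors among themselves (gain \<open>e\<close>, loss \<open>1\<close>),
  and the remaining part \<open>f\<close> of their rescaled payoffs is common to all three.\<close>
locale cyclic_block = br_trajectory +
  fixes e :: real and s :: "3 \<Rightarrow> 7" and f :: "real \<Rightarrow> real"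
  assumes e_pos: "0 < e" and e_le_1: "e \<le> 1"
    and payoff: "exp t * (U *v x t) $ s k = - z (s (k + 1)) t + e * z (s (k + 2)) t + f t"
    and not_all_equal_0: "\<not> (x 0 $ s 1 = x 0 $ s 2 \<and> x 0 $ s 2 = x 0 $ s 3)"
begin

definition R :: "3 \<Rightarrow> real \<Rightarrow> real" where
  "R k t = - z (s (k + 1)) t + e * z (s (k + 2)) t"

definition W :: "real \<Rightarrow> real" where
  "W t = Max (range (\<lambda>k. R k t))"

definition S :: "real \<Rightarrow> real" where
  "S t = (\<Sum>k\<in>UNIV. z (s k) t)"

text \<open>A Lyapunov function: it never decreases, even at three-way ties, and it vanishes whenever
  the three payoffs \<open>R k\<close> tie.\<close>
definition V :: "real \<Rightarrow> real" where
  "V t = W t - (e - 1) / 3 * S t"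

lemma R_le_W: "R k t \<le> W t"
  unfolding W_def by (rule Max_ge) auto

lemma W_attained: "\<exists>k. R k t = W t"
proof -
  have "W t \<in> range (\<lambda>k. R k t)"
    unfolding W_def by (rule Max_in) auto
  then show ?thesis by auto
qed

lemma W_eq_max: "W t = max (R 1 t) (max (R 2 t) (R 3 t))"
  by (simp add: W_def UNIV_3)

lemma sum_R: "(\<Sum>k\<in>UNIV. R k t) = (e - 1) * S t"
proof -
  have "(\<Sum>k\<in>UNIV. R k t) = - (\<Sum>k\<in>UNIV. z (s (k + 1)) t) + e * (\<Sum>k\<in>UNIV. z (s (k + 2)) t)"
    by (simp add: R_def sum.distrib sum_negf sum_distrib_left sum_subtractf)
  also have "\<dots> = (e - 1) * S t"
    by (simp add: S_def sum_UNIV_shift[of "\<lambda>k. z (s k) t"] algebra_simps)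
  finally show ?thesis .
qed

lemma payoff_R: "exp t * (U *v x t) $ s k = R k t + f t"
  by (simp add: payoff R_def)

lemma replies_zero_if_R_lt_W:
  assumes "replies t y" "R k t < W t"
  shows "y $ s k = 0"
proof (rule ccontr)
  assume "y $ s k \<noteq> 0"
  then have "0 < y $ s k"
    using replies_nonneg[OF assms(1)] by (simp add: less_le)
  then have "exp t * (U *v x t) $ s j \<le> exp t * (U *v x t) $ s k" for j
    using assms(1) BR_pos_imp_best by (auto simp: replies_def)
  then have "R j t \<le> R k t" for j
    using payoff_R[of t j] payoff_R[of t k] by (metis add_le_cancel_right)
  moreover obtain j where "R j t = W t"
    using W_attained by blast
  ultimately show False
    using assms(2) by (metis not_le)
qed

lemma R_has_derivative:
  assumes "replies t y"
  shows "(R k has_real_derivative exp t * (- y $ s (k + 1) + e * y $ s (k + 2))) (at t within {0..})"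
  using DERIV_add[OF DERIV_minus DERIV_cmult, OF z_has_derivative z_has_derivative, OF assms assms]
  by (simp add: R_def[abs_def] algebra_simps)

lemma S_has_derivative:
  assumes "replies t y"
  shows "(S has_real_derivative exp t * (\<Sum>k\<in>UNIV. y $ s k)) (at t within {0..})"
  unfolding S_def[abs_def] sum_distrib_left
  by (rule DERIV_sum) (rule z_has_derivative[OF assms])

lemma state_lipschitz_R: "state_lipschitz (R k)"
  using state_lipschitz_linear[OF state_lipschitz_z state_lipschitz_z, of "-1" "s (k + 1)" e "s (k + 2)"]
  by (simp add: R_def[abs_def])

lemma state_lipschitz_W: "state_lipschitz W"
  unfolding W_eq_max[abs_def] by (intro state_lipschitz_max state_lipschitz_R)

lemma state_lipschitz_S: "state_lipschitz S"
  unfolding S_def[abs_def] sum_UNIV_3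
  using state_lipschitz_linear[OF state_lipschitz_linear[OF state_lipschitz_z state_lipschitz_z] state_lipschitz_z,
      of 1 1 "s 1" 1 "s 2" 1 "s 3"]
  by simp

lemma state_lipschitz_V: "state_lipschitz V"
proof -
  have "V = (\<lambda>t. 1 * W t + (- ((e - 1) / 3)) * S t)"
    by (simp add: V_def[abs_def])
  then show ?thesis
    by (simp only: state_lipschitz_linear[OF state_lipschitz_W state_lipschitz_S])
qed

lemma R_eq_W_next_lt:
  assumes "R j t < W t"
  shows "\<exists>k. R k t = W t \<and> R (k + 1) t < W t"
proof -
  obtain k where k: "R k t = W t"
    using W_attained by blast
  show ?thesis
  proof (cases "R (k + 1) t < W t")
    case False
    then have "R (k + 1) t = W t"
      using R_le_W[of "k + 1" t] by simp
    moreover have "R (k + 2) t < W t"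
      using assms k \<open>R (k + 1) t = W t\<close> three_cases[of j k] by auto
    ultimately show ?thesis by auto
  qed (use k in blast)
qed

lemma V_right_dini:
  assumes "replies t y" "0 \<le> t"
  shows "right_dini_ge V t 0"
proof -
  define m where "m = (e - 1) / 3 * (exp t * (\<Sum>k\<in>UNIV. y $ s k))"
  have "m \<le> 0"
    unfolding m_def using e_le_1 replies_nonneg[OF assms(1)]
    by (intro mult_nonpos_nonneg mult_nonneg_nonneg sum_nonneg) auto
  define d where "d k = exp t * (- y $ s (k + 1) + e * y $ s (k + 2)) - m" for k
  have deriv: "((\<lambda>\<tau>. R k \<tau> - (e - 1) / 3 * S \<tau>) has_real_derivative d k) (at t within {0..})" for k
    unfolding d_def m_def by (intro DERIV_diff DERIV_cmult R_has_derivative S_has_derivative assms(1))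
  have below: "R k \<tau> - (e - 1) / 3 * S \<tau> \<le> V \<tau>" for k \<tau>
    using R_le_W by (simp add: V_def)
  have "\<exists>k. R k t = W t \<and> 0 \<le> d k"
  proof (cases "\<exists>j. R j t < W t")
    case True
    then obtain k where "R k t = W t" "R (k + 1) t < W t"
      using R_eq_W_next_lt by blast
    moreover from this(2) have "y $ s (k + 1) = 0"
      by (rule replies_zero_if_R_lt_W[OF assms(1)])
    moreover have "0 \<le> exp t * (e * y $ s (k + 2))"
      using e_pos replies_nonneg[OF assms(1)] by simp
    ultimately show ?thesis
      using \<open>m \<le> 0\<close> by (auto simp: d_def)
  next
    case False
    then have "R k t = W t" for k
      using R_le_W[of k t] by (simp add: not_less eq_iff)
    \<comment> \<open>the weight \<open>(e - 1)/3\<close> of \<open>S\<close> in \<open>V\<close> makes the three slopes sum to zero\<close>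
    moreover have "(\<Sum>k\<in>UNIV. d k) = 0"
      by (simp add: d_def m_def sum_UNIV_3 field_simps)
    then have "\<exists>k. 0 \<le> d k"
      unfolding sum_UNIV_3 by (metis add_neg_neg less_irrefl not_le)
    ultimately show ?thesis by blast
  qed
  then obtain k where "R k t = W t" "0 \<le> d k" by blast
  then show ?thesis
    using below assms(2) by (intro right_dini_ge_from_minorant_derivative[OF deriv]) (auto simp: V_def)
qed

lemma V_mono: "0 \<le> u \<Longrightarrow> u \<le> v \<Longrightarrow> V u \<le> V v"
  by (rule state_lipschitz_mono[OF state_lipschitz_V]) (auto intro: V_right_dini)

lemma V_0_pos: "0 < V 0"
proof (rule ccontr)
  assume "\<not> 0 < V 0"
  then have "R k 0 - (e - 1) / 3 * S 0 \<le> 0" for k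
    using R_le_W[of k 0] by (simp add: V_def)
  moreover have "(\<Sum>k\<in>UNIV. - (R k 0 - (e - 1) / 3 * S 0)) = 0"
    by (simp add: sum_R sum_subtractf sum_negf)
  ultimately have "R k 0 - (e - 1) / 3 * S 0 = 0" for k
    using sum_nonneg_eq_0_iff[of UNIV "\<lambda>k. - (R k 0 - (e - 1) / 3 * S 0)"] by simp
  then have "R 1 0 = R 2 0" "R 2 0 = R 3 0"
    by (metis eq_iff_diff_eq_0)+
  then have "x 0 $ s 1 = x 0 $ s 2 \<and> x 0 $ s 2 = x 0 $ s 3"
    by (intro rps_equal_payoffs_imp_equal[where e = e]) (simp_all add: R_def z_def)
  with not_all_equal_0 show False ..
qed

lemma R_not_all_equal:
  assumes "0 \<le> t"
  shows "\<exists>k. R k t < W t"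
proof (rule ccontr)
  assume "\<nexists>k. R k t < W t"
  then have "R k t = W t" for k
    using R_le_W[of k t] by (simp add: not_less eq_iff)
  then have "V t = 0"
    using sum_R[of t] by (simp add: V_def sum_UNIV_3)
  with V_0_pos V_mono[OF order_refl assms] show False by simp
qed

lemma W_mono: "0 \<le> u \<Longrightarrow> u \<le> v \<Longrightarrow> W u \<le> W v"
proof (rule state_lipschitz_mono[OF state_lipschitz_W])
  fix t y assume "0 \<le> u" "u < t" and reply: "replies t y"
  then obtain k where k: "R k t = W t" "R (k + 1) t < W t"
    using R_not_all_equal[of t] R_eq_W_next_lt by force
  then have "y $ s (k + 1) = 0"
    by (intro replies_zero_if_R_lt_W[OF reply])
  then have "0 \<le> exp t * (- y $ s (k + 1) + e * y $ s (k + 2))"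
    using e_pos replies_nonneg[OF reply] by simp
  then show "right_dini_ge W t 0"
    using k R_le_W \<open>0 \<le> u\<close> \<open>u < t\<close>
    by (intro right_dini_ge_from_minorant_derivative[OF R_has_derivative[OF reply]]) auto
qed

lemma W_le_e_S:
  assumes "0 \<le> t"
  shows "W t \<le> e * S t"
proof -
  have "R k t \<le> e * S t" for k
  proof -
    have "z (s (k + 2)) t \<le> S t"
      unfolding S_def using z_nonneg[OF assms] by (intro member_le_sum) auto
    then have "e * z (s (k + 2)) t \<le> e * S t"
      using e_pos by simp
    then show ?thesis
      using z_nonneg[OF assms, of "s (k + 1)"] by (simp add: R_def)
  qed
  with W_attained[of t] show ?thesis by metis
qed

lemma z_const_if_R_lt_W:
  assumes "0 \<le> u" "u \<le> v" "\<And>\<tau>. u < \<tau> \<Longrightarrow> \<tau> < v \<Longrightarrow> R k \<tau> < W \<tau>"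
  shows "z (s k) v = z (s k) u"
proof (rule z_const_if_not_best[OF assms(1,2)])
  fix \<tau> assume "u < \<tau>" "\<tau> < v"
  then have "R k \<tau> < W \<tau>" by (rule assms(3))
  moreover obtain j where "R j \<tau> = W \<tau>"
    using W_attained by blast
  ultimately have "exp \<tau> * (U *v x \<tau>) $ s k < exp \<tau> * (U *v x \<tau>) $ s j"
    by (simp add: payoff_R)
  then show "\<exists>j. (U *v x \<tau>) $ s k < (U *v x \<tau>) $ j"
    by (auto simp: mult_less_cancel_left_pos)
qed

lemma last_time_R_eq_W:
  assumes "0 \<le> a" "a \<le> b" "R k a = W a"
  shows "\<exists>c\<in>{a..b}. R k c = W c \<and> (\<forall>\<tau>\<in>{c<..<b}. R k \<tau> < W \<tau>)"
proof -
  have "continuous_on {a..b} (\<lambda>\<tau>. R k \<tau> - W \<tau>)"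
    using assms(1,2) state_lipschitz_linear[OF state_lipschitz_R state_lipschitz_W, of 1 k "-1"]
    by (intro state_lipschitz_continuous_on) auto
  from continuous_on_last_point_ge[OF this assms(2), of 0] show ?thesis
    using assms(3) R_le_W by (metis diff_ge_0_iff_ge diff_less_0_iff_less order_antisym)
qed

lemma first_time_R_eq_W:
  assumes "0 \<le> a" "a \<le> b" "R k b = W b"
  shows "\<exists>c\<in>{a..b}. R k c = W c \<and> (\<forall>\<tau>\<in>{a<..<c}. R k \<tau> < W \<tau>)"
proof -
  have "continuous_on {a..b} (\<lambda>\<tau>. R k \<tau> - W \<tau>)"
    using assms(1,2) state_lipschitz_linear[OF state_lipschitz_R state_lipschitz_W, of 1 k "-1"]
    by (intro state_lipschitz_continuous_on) auto
  from continuous_on_first_point_ge[OF this assms(2), of 0] show ?thesis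
    using assms(3) R_le_W by (metis diff_ge_0_iff_ge diff_less_0_iff_less order_antisym)
qed

lemma z_bound_from_R_eq_W:
  assumes "0 \<le> T" "T \<le> t"
    and bound: "\<And>\<sigma>. T \<le> \<sigma> \<Longrightarrow> \<sigma> \<le> t \<Longrightarrow> R k \<sigma> = W \<sigma> \<Longrightarrow> z (s k) \<sigma> \<le> M"
  shows "z (s k) t \<le> max (z (s k) T) M"
proof (cases "\<exists>\<sigma>\<in>{T..t}. R k \<sigma> = W \<sigma>")
  case True
  then obtain \<sigma> where "\<sigma> \<in> {T..t}" "R k \<sigma> = W \<sigma>" by blast
  then obtain c where c: "c \<in> {\<sigma>..t}" "R k c = W c" "\<forall>\<tau>\<in>{c<..<t}. R k \<tau> < W \<tau>"
    using last_time_R_eq_W[of \<sigma> t k] assms(1) by auto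
  with \<open>\<sigma> \<in> {T..t}\<close> assms(1) have "z (s k) t = z (s k) c"
    by (intro z_const_if_R_lt_W) auto
  also have "\<dots> \<le> M"
    using c \<open>\<sigma> \<in> {T..t}\<close> by (intro bound) auto
  finally show ?thesis by simp
next
  case False
  have "R k \<tau> < W \<tau>" if "T < \<tau>" "\<tau> < t" for \<tau>
    using False that R_le_W[of k \<tau>] by (auto simp: less_le)
  then have "z (s k) t = z (s k) T"
    by (rule z_const_if_R_lt_W[OF assms(1,2)])
  then show ?thesis by simp
qed

lemma z_succ_bounded:
  assumes "0 \<le> T" and bound: "\<And>t. T \<le> t \<Longrightarrow> z (s k) t \<le> M"
  shows "\<exists>M'. \<forall>t\<ge>T. z (s (k + 1)) t \<le> M'"
proof (intro exI[of _ "max (z (s (k + 1)) T) ((1 + e) * M / e)"] allI impI)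
  fix t assume "T \<le> t"
  with \<open>0 \<le> T\<close> show "z (s (k + 1)) t \<le> max (z (s (k + 1)) T) ((1 + e) * M / e)"
  proof (rule z_bound_from_R_eq_W)
    fix \<sigma> assume \<sigma>: "T \<le> \<sigma>" "\<sigma> \<le> t" "R (k + 1) \<sigma> = W \<sigma>"
    then have "R (k + 2) \<sigma> \<le> R (k + 1) \<sigma>"
      using R_le_W by metis
    then have "- z (s k) \<sigma> + e * z (s (k + 1)) \<sigma> \<le> - z (s (k + 2)) \<sigma> + e * z (s k) \<sigma>"
      by (simp add: R_def)
    then have "e * z (s (k + 1)) \<sigma> \<le> (1 + e) * z (s k) \<sigma> - z (s (k + 2)) \<sigma>"
      by (simp add: distrib_right)
    moreover have "(1 + e) * z (s k) \<sigma> \<le> (1 + e) * M"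
      using bound[of \<sigma>] \<sigma> e_pos by (intro mult_left_mono) auto
    ultimately have "e * z (s (k + 1)) \<sigma> \<le> (1 + e) * M"
      using z_nonneg[of \<sigma> "s (k + 2)"] \<sigma> \<open>0 \<le> T\<close> by simp
    then show "z (s (k + 1)) \<sigma> \<le> (1 + e) * M / e"
      using e_pos by (simp add: pos_le_divide_eq mult.commute)
  qed
qed

text \<open>If \<open>s k\<close> were never again a best reply within the block, \<open>z (s k)\<close> would freeze; then
  \<open>z (s (k + 1))\<close> and in turn \<open>z (s (k + 2))\<close> can only grow while they are best replies, which
  is only possible up to a bound, contradicting the growth of \<open>S\<close>.\<close>
lemma R_eq_W_recurs:
  assumes unbounded: "\<And>C T. \<exists>t\<ge>T. C < S t" and "0 \<le> T"
  shows "\<exists>t\<ge>T. R k t = W t"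
proof (rule ccontr)
  assume "\<not> (\<exists>t\<ge>T. R k t = W t)"
  then have "R k t < W t" if "T \<le> t" for t
    using that R_le_W[of k t] by (auto simp: le_less)
  then have frozen: "z (s k) t = z (s k) T" if "T \<le> t" for t
    using \<open>0 \<le> T\<close> that by (intro z_const_if_R_lt_W) auto
  have "\<exists>M1. \<forall>t\<ge>T. z (s (k + 1)) t \<le> M1"
    using frozen by (intro z_succ_bounded[OF \<open>0 \<le> T\<close>, of k "z (s k) T"]) (metis order_refl)
  then obtain M1 where M1: "\<And>t. T \<le> t \<Longrightarrow> z (s (k + 1)) t \<le> M1"
    by blast
  have "\<exists>M2. \<forall>t\<ge>T. z (s (k + 1 + 1)) t \<le> M2"
    using M1 by (intro z_succ_bounded[OF \<open>0 \<le> T\<close>, of "k + 1" M1])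
  then obtain M2 where M2: "\<And>t. T \<le> t \<Longrightarrow> z (s (k + 2)) t \<le> M2"
    by auto
  obtain t where "t \<ge> T" "z (s k) T + M1 + M2 < S t"
    using unbounded by blast
  moreover have "S t = z (s k) t + z (s (k + 1)) t + z (s (k + 2)) t"
    unfolding S_def by (rule sum_UNIV_3_rotate)
  ultimately show False
    using frozen[of t] M1[of t] M2[of t] by linarith
qed

end

section \<open>The game \<open>Umat e\<close>\<close>

lemma vector_7_nth:
  "vector [a1, a2, a3, a4, a5, a6, a7] $ (1::7) = (a1::'a::zero)"
  "vector [a1, a2, a3, a4, a5, a6, a7] $ (2::7) = a2"
  "vector [a1, a2, a3, a4, a5, a6, a7] $ (3::7) = a3"
  "vector [a1, a2, a3, a4, a5, a6, a7] $ (4::7) = a4"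
  "vector [a1, a2, a3, a4, a5, a6, a7] $ (5::7) = a5"
  "vector [a1, a2, a3, a4, a5, a6, a7] $ (6::7) = a6"
  "vector [a1, a2, a3, a4, a5, a6, a7] $ (7::7) = a7"
  unfolding vector_def by simp_all

lemma matrix_vector_mult_7:
  "((M::real^7^7) *v v) $ i = M$i$1 * v$1 + M$i$2 * v$2 + M$i$3 * v$3 + M$i$4 * v$4 + M$i$5 * v$5 + M$i$6 * v$6 + M$i$7 * v$7"
  by (simp only: matrix_vector_mult_def vec_lambda_beta sum_UNIV_7)

lemma Umat_mult:
  "(Umat e *v v) $ 1 = - v$2 + e * v$3 - 10 * v$4 + (e - 1/3) * (v$5 + v$6 + v$7)"
  "(Umat e *v v) $ 2 = - v$3 + e * v$1 - 10 * v$4 + (e - 1/3) * (v$5 + v$6 + v$7)"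
  "(Umat e *v v) $ 3 = - v$1 + e * v$2 - 10 * v$4 + (e - 1/3) * (v$5 + v$6 + v$7)"
  "(Umat e *v v) $ 4 = 2 * v$3 - 2 * v$1 - 2 * v$2 - (v$5 + v$6 + v$7) / 3"
  "(Umat e *v v) $ 5 = - v$6 + e * v$7 - (v$1 + v$2 + v$3) / 3 + 10 * v$4"
  "(Umat e *v v) $ 6 = - v$7 + e * v$5 - (v$1 + v$2 + v$3) / 3 + 10 * v$4"
  "(Umat e *v v) $ 7 = - v$5 + e * v$6 - (v$1 + v$2 + v$3) / 3 + 10 * v$4"
  by (simp only: matrix_vector_mult_7 Umat_def vector_7_nth; simp add: field_simps)+

definition block :: "7 \<Rightarrow> 3 \<Rightarrow> 7" where
  "block a k = (if k = 1 then a else if k = 2 then a + 1 else a + 2)"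

lemma block_simps [simp]:
  "block a 1 = a" "block a 2 = a + 1" "block a 3 = a + 2"
  by (simp_all add: block_def)

text \<open>Eliminating \<open>a3\<close> and then \<open>a1\<close> from the three middle constraints bounds \<open>a2\<close>; the last
  constraint then bounds the sum.\<close>
lemma cycle_constraints_bounded:
  fixes e W0 W0' :: real
  assumes "0 < e" "e < 2/9"
  shows "\<exists>K. \<forall>a1 a2 a3. 0 \<le> a1 \<and> 0 \<le> a2 \<and> a1 \<le> e * a2 - W0 \<and> a2 + W0 \<le> e * a3 \<and>
    (2 - 7 * e) * a3 \<le> (1 - 5 * e) * a1 + (2 - 4 * e) * a2 - 3 * e * W0' \<and> e * a3 \<le> (1 + e) * a2 - a1
    \<longrightarrow> a1 + a2 + a3 \<le> K"
proof -
  define c where "c = max 0 (1 - 5 * e)"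
  define C where "C = - (2 - 7 * e) * W0 - e * c * W0 - 3 * e\<^sup>2 * W0'"
  define \<gamma> where "\<gamma> = 2 - 9 * e + 4 * e\<^sup>2 - e\<^sup>2 * c"
  have c: "0 \<le> c" "c \<le> 1" "1 - 5 * e \<le> c"
    using assms by (auto simp: c_def)
  have "e\<^sup>2 * c \<le> e\<^sup>2"
    using c by (simp add: mult_left_le)
  then have "\<gamma> > 0"
    unfolding \<gamma>_def using assms zero_le_power2[of e] by linarith
  show ?thesis
  proof (intro exI[of _ "(1 + 2 * e) * max 0 (C / \<gamma>) / e"] allI impI, elim conjE)
    fix a1 a2 a3 assume "0 \<le> a1" "0 \<le> a2" and F1: "a1 \<le> e * a2 - W0" and F2: "a2 + W0 \<le> e * a3"
      and F3: "(2 - 7 * e) * a3 \<le> (1 - 5 * e) * a1 + (2 - 4 * e) * a2 - 3 * e * W0'"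
      and F4: "e * a3 \<le> (1 + e) * a2 - a1"
    have "(2 - 7 * e) * (a2 + W0) \<le> (2 - 7 * e) * (e * a3)"
      using F2 assms by (intro mult_left_mono) auto
    moreover have "e * ((2 - 7 * e) * a3) \<le> e * ((1 - 5 * e) * a1 + (2 - 4 * e) * a2 - 3 * e * W0')"
      using F3 assms by (intro mult_left_mono) auto
    moreover have "(e * (1 - 5 * e)) * a1 \<le> (e * c) * a1"
      using c assms \<open>0 \<le> a1\<close> by (intro mult_right_mono) auto
    moreover have "(e * c) * a1 \<le> (e * c) * (e * a2 - W0)"
      using F1 c assms by (intro mult_left_mono) auto
    ultimately have "\<gamma> * a2 \<le> C"
      unfolding \<gamma>_def C_def by (simp add: algebra_simps power2_eq_square)
    then have "a2 \<le> C / \<gamma>"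
      using \<open>\<gamma> > 0\<close> by (simp add: pos_le_divide_eq mult.commute)
    have "e * (a1 + a2 + a3) \<le> (e - 1) * a1 + (1 + 2 * e) * a2"
      using F4 by (simp add: algebra_simps)
    also have "\<dots> \<le> (1 + 2 * e) * a2"
      using \<open>0 \<le> a1\<close> assms by (simp add: mult_nonpos_nonneg)
    also have "\<dots> \<le> (1 + 2 * e) * max 0 (C / \<gamma>)"
      using \<open>a2 \<le> C / \<gamma>\<close> assms by (intro mult_left_mono) auto
    finally show "a1 + a2 + a3 \<le> (1 + 2 * e) * max 0 (C / \<gamma>) / e"
      using assms by (simp add: pos_le_divide_eq mult.commute)
  qed
qed

locale best_reply_in_123 = br_trajectory "Umat e" x for e x +
  assumes e_pos: "0 < e" and e_less: "e < 2/9"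
    and not_all_equal_123: "\<not> (x 0 $ 1 = x 0 $ 2 \<and> x 0 $ 2 = x 0 $ 3)"
    and not_all_equal_567: "\<not> (x 0 $ 5 = x 0 $ 6 \<and> x 0 $ 6 = x 0 $ 7)"
    and best_in_123: "\<And>t. 0 < t \<Longrightarrow> \<exists>i\<in>{1, 2, 3}. \<forall>j. (Umat e *v x t) $ j \<le> (Umat e *v x t) $ i"

sublocale best_reply_in_123 \<subseteq> rps123: cyclic_block "Umat e" x e "block 1"
  "\<lambda>t. - 10 * z 4 t + (e - 1/3) * (z 5 t + z 6 t + z 7 t)"
proof unfold_locales
  show "0 < e" "e \<le> 1"
    using e_pos e_less by auto
  show "\<not> (x 0 $ block 1 1 = x 0 $ block 1 2 \<and> x 0 $ block 1 2 = x 0 $ block 1 3)"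
    using not_all_equal_123 by simp
  fix t k
  show "exp t * (Umat e *v x t) $ block 1 k =
      - z (block 1 (k + 1)) t + e * z (block 1 (k + 2)) t + (- 10 * z 4 t + (e - 1/3) * (z 5 t + z 6 t + z 7 t))"
    using exhaust_3[of k] by (auto simp: Umat_mult z_def algebra_simps)
qed

sublocale best_reply_in_123 \<subseteq> rps567: cyclic_block "Umat e" x e "block 5"
  "\<lambda>t. - (z 1 t + z 2 t + z 3 t) / 3 + 10 * z 4 t"
proof unfold_locales
  show "0 < e" "e \<le> 1"
    using e_pos e_less by auto
  show "\<not> (x 0 $ block 5 1 = x 0 $ block 5 2 \<and> x 0 $ block 5 2 = x 0 $ block 5 3)"
    using not_all_equal_567 by simp
  fix t k
  show "exp t * (Umat e *v x t) $ block 5 k =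
      - z (block 5 (k + 1)) t + e * z (block 5 (k + 2)) t + (- (z 1 t + z 2 t + z 3 t) / 3 + 10 * z 4 t)"
    using exhaust_3[of k] by (auto simp: Umat_mult z_def field_simps)
qed

context best_reply_in_123
begin

lemma S_123: "rps123.S t = z 1 t + z 2 t + z 3 t"
  by (simp add: rps123.S_def sum_UNIV_3)

lemma S_567: "rps567.S t = z 5 t + z 6 t + z 7 t"
  by (simp add: rps567.S_def sum_UNIV_3)

lemma R_123: "rps123.R 1 t = - z 2 t + e * z 3 t" "rps123.R 3 t = - z 1 t + e * z 2 t"
  by (simp_all add: rps123.R_def)

lemma z_sum:
  assumes "0 \<le> t"
  shows "rps123.S t + z 4 t + rps567.S t = exp t"
proof -
  have "x t $ 1 + x t $ 2 + x t $ 3 + x t $ 4 + x t $ 5 + x t $ 6 + x t $ 7 = 1"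
    using in_simplex[OF assms] by (simp add: simplex7_def sum_UNIV_7)
  then have "exp t * (x t $ 1 + x t $ 2 + x t $ 3 + x t $ 4 + x t $ 5 + x t $ 6 + x t $ 7) = exp t"
    by simp
  then show ?thesis
    by (simp add: S_123 S_567 z_def algebra_simps)
qed

lemma payoff_le_W_123:
  assumes "0 < t"
  shows "exp t * (Umat e *v x t) $ j \<le> rps123.W t - 10 * z 4 t + (e - 1/3) * rps567.S t"
proof -
  obtain i where "i \<in> {1, 2, 3}" and best: "(Umat e *v x t) $ j \<le> (Umat e *v x t) $ i"
    using best_in_123[OF assms] by blast
  then have "i = block 1 1 \<or> i = block 1 2 \<or> i = block 1 3"
    by simp
  then obtain k where "i = block 1 k"
    by blast
  then have "exp t * (Umat e *v x t) $ i \<le> rps123.W t - 10 * z 4 t + (e - 1/3) * rps567.S t"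
    using rps123.payoff_R[of t k] rps123.R_le_W[of k t] by (simp add: S_567)
  with best show ?thesis
    by (meson exp_gt_zero mult_left_mono order_trans less_imp_le)
qed

lemma best_123_beats_567:
  assumes "0 < t"
  shows "(1/3 - e) * rps567.S t + 20 * z 4 t \<le> rps123.W t - rps567.W t + rps123.S t / 3"
proof -
  obtain j where "rps567.R j t = rps567.W t"
    using rps567.W_attained by blast
  then have "exp t * (Umat e *v x t) $ block 5 j = rps567.W t + (- (z 1 t + z 2 t + z 3 t) / 3 + 10 * z 4 t)"
    using rps567.payoff_R[of t j] by simp
  with payoff_le_W_123[OF assms, of "block 5 j"] show ?thesis
    by (simp add: S_123 field_simps; linarith)
qed

lemma S_123_lower:
  assumes "0 < t"
  shows "(1/3 - e) * exp t + rps567.W 0 \<le> 2/3 * rps123.S t"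
proof -
  have "(1/3 - e) * z 4 t \<le> 20 * z 4 t"
    using z_nonneg[of t 4] e_pos assms by (intro mult_right_mono) auto
  moreover have "rps567.W 0 \<le> rps567.W t" "rps123.W t \<le> e * rps123.S t"
    using assms rps567.W_mono[of 0 t] rps123.W_le_e_S[of t] by auto
  ultimately have "(1/3 - e) * (rps567.S t + z 4 t) \<le> e * rps123.S t - rps567.W 0 + rps123.S t / 3"
    using best_123_beats_567[OF assms] by (simp add: distrib_left)
  moreover have "rps567.S t + z 4 t = exp t - rps123.S t"
    using z_sum[of t] assms by simp
  ultimately have "(1/3 - e) * (exp t - rps123.S t) \<le> e * rps123.S t - rps567.W 0 + rps123.S t / 3"
    by simp
  then show ?thesis
    by (simp add: algebra_simps)
qed

lemma S_123_unbounded: "\<exists>T>0. \<forall>t\<ge>T. C < rps123.S t"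
proof -
  define M where "M = (2/3 * C - rps567.W 0) / (1/3 - e)"
  show ?thesis
  proof (intro exI[of _ "1 + \<bar>M\<bar>"] conjI allI impI)
    fix t assume t: "1 + \<bar>M\<bar> \<le> t"
    then have "M < exp t"
      using exp_ge_add_one_self[of t] by linarith
    then have "2/3 * C - rps567.W 0 < (1/3 - e) * exp t"
      using e_less by (simp add: M_def pos_divide_less_eq mult.commute)
    then show "C < rps123.S t"
      using S_123_lower[of t] t by linarith
  qed simp
qed

lemma exit_from_3:
  assumes "0 < t" "rps123.R 3 t = rps123.W t"
  shows "(2 - 7 * e) * z 3 t \<le> (1 - 5 * e) * z 1 t + (2 - 4 * e) * z 2 t - 3 * e * rps567.W 0"
proof -
  have "exp t * (Umat e *v x t) $ 4 \<le> rps123.W t - 10 * z 4 t + (e - 1/3) * rps567.S t"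
    by (rule payoff_le_W_123[OF assms(1)])
  moreover have "exp t * (Umat e *v x t) $ 4 = 2 * z 3 t - 2 * z 1 t - 2 * z 2 t - rps567.S t / 3"
    by (simp add: Umat_mult S_567 z_def field_simps)
  ultimately have X: "2 * z 3 t - z 1 t - (2 + e) * z 2 t + 10 * z 4 t \<le> e * rps567.S t"
    using assms(2) by (simp add: R_123 algebra_simps)
  have "rps567.W 0 \<le> rps567.W t"
    using assms(1) by (intro rps567.W_mono) auto
  then have A: "(1/3 - e) * rps567.S t + 20 * z 4 t \<le> - z 1 t + e * z 2 t - rps567.W 0 + rps123.S t / 3"
    using best_123_beats_567[OF assms(1)] assms(2) by (simp add: R_123)
  have "0 \<le> 1 - 3 * e" "0 \<le> 3 * e"
    using e_pos e_less by auto
  note X' = mult_left_mono[OF X this(1)] and A' = mult_left_mono[OF A this(2)]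
  have "0 \<le> 10 * z 4 t + 30 * e * z 4 t"
    using z_nonneg[of t 4] e_pos assms(1) by simp
  moreover have "(1 - 5 * e) * z 1 t + (2 - 4 * e) * z 2 t - 3 * e * rps567.W 0 - (2 - 7 * e) * z 3 t =
      ((1 - 3 * e) * (e * rps567.S t) - (1 - 3 * e) * (2 * z 3 t - z 1 t - (2 + e) * z 2 t + 10 * z 4 t))
    + (3 * e * (- z 1 t + e * z 2 t - rps567.W 0 + rps123.S t / 3) - 3 * e * ((1/3 - e) * rps567.S t + 20 * z 4 t))
    + (10 * z 4 t + 30 * e * z 4 t)"
    by (simp add: S_123 field_simps)
  ultimately show ?thesis
    using X' A' by linarith
qed

lemma constraints_at_last_exit:
  assumes "0 < s" "s \<le> t" "rps123.R 3 s = rps123.W s" "rps123.R 1 t = rps123.W t"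
    and "z 1 t = z 1 s" and "\<forall>\<tau>\<in>{s<..<t}. rps123.R 3 \<tau> < rps123.W \<tau>"
  shows "z 1 s \<le> e * z 2 s - rps123.W 0" "z 2 s + rps123.W 0 \<le> e * z 3 s"
    "e * z 3 s \<le> (1 + e) * z 2 s - z 1 s"
proof -
  have z3: "z 3 t = z 3 s"
    using rps123.z_const_if_R_lt_W[of s t 3] assms by simp
  have "z 2 s \<le> z 2 t"
    using z_mono[of s t 2] assms(1,2) by simp
  then have "(1 + e) * z 2 s \<le> (1 + e) * z 2 t"
    using e_pos by simp
  show F1: "z 1 s \<le> e * z 2 s - rps123.W 0"
    using rps123.W_mono[of 0 s] assms(1,3) by (simp add: R_123)
  have "rps123.R 3 t \<le> rps123.R 1 t"
    using assms(4) rps123.R_le_W by metis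
  then have "(1 + e) * z 2 t - z 1 t \<le> e * z 3 t"
    by (simp add: R_123 algebra_simps)
  with F1 z3 assms(5) \<open>(1 + e) * z 2 s \<le> (1 + e) * z 2 t\<close> show "z 2 s + rps123.W 0 \<le> e * z 3 s"
    by (simp add: algebra_simps)
  have "rps123.R 1 s \<le> rps123.R 3 s"
    using assms(3) rps123.R_le_W by metis
  then show "e * z 3 s \<le> (1 + e) * z 2 s - z 1 s"
    by (simp add: R_123 algebra_simps)
qed

text \<open>Between a time when strategy 3 is a best reply within \<open>{1, 2, 3}\<close> and the next time strategy 1
  is, consider the last time \<open>s\<close> at which 3 is; the constraints at \<open>s\<close> bound
  \<open>z\<^sub>1 + z\<^sub>2 + z\<^sub>3\<close>, although this sum is unbounded.\<close>
lemma contradiction: False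
proof -
  obtain K where K: "\<And>a1 a2 a3. 0 \<le> a1 \<Longrightarrow> 0 \<le> a2 \<Longrightarrow> a1 \<le> e * a2 - rps123.W 0 \<Longrightarrow>
      a2 + rps123.W 0 \<le> e * a3 \<Longrightarrow>
      (2 - 7 * e) * a3 \<le> (1 - 5 * e) * a1 + (2 - 4 * e) * a2 - 3 * e * rps567.W 0 \<Longrightarrow>
      e * a3 \<le> (1 + e) * a2 - a1 \<Longrightarrow> a1 + a2 + a3 \<le> K"
    using cycle_constraints_bounded[OF e_pos e_less, of "rps123.W 0" "rps567.W 0"] by blast
  obtain T0 where "T0 > 0" and large: "\<And>t. T0 \<le> t \<Longrightarrow> K < rps123.S t"
    using S_123_unbounded by blast
  have unbounded: "\<exists>t\<ge>T. C < rps123.S t" for C T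
  proof -
    obtain T' where "\<forall>t\<ge>T'. C < rps123.S t"
      using S_123_unbounded by blast
    then show ?thesis
      by (intro exI[of _ "max T T'"]) auto
  qed
  obtain s0 where "T0 \<le> s0" "rps123.R 3 s0 = rps123.W s0"
    using rps123.R_eq_W_recurs[OF unbounded, of T0 3] \<open>T0 > 0\<close> by auto
  moreover obtain t1 where "s0 \<le> t1" "rps123.R 1 t1 = rps123.W t1"
    using rps123.R_eq_W_recurs[OF unbounded, of s0 1] \<open>T0 > 0\<close> \<open>T0 \<le> s0\<close> by auto
  ultimately obtain t1' where t1': "t1' \<in> {s0..t1}" "rps123.R 1 t1' = rps123.W t1'"
      "\<forall>\<tau>\<in>{s0<..<t1'}. rps123.R 1 \<tau> < rps123.W \<tau>"
    using rps123.first_time_R_eq_W[of s0 t1 1] \<open>T0 > 0\<close> by auto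
  then obtain s where s: "s \<in> {s0..t1'}" "rps123.R 3 s = rps123.W s"
      "\<forall>\<tau>\<in>{s<..<t1'}. rps123.R 3 \<tau> < rps123.W \<tau>"
    using rps123.last_time_R_eq_W[of s0 t1' 3] \<open>rps123.R 3 s0 = rps123.W s0\<close> \<open>T0 > 0\<close> \<open>T0 \<le> s0\<close> by auto
  have "0 < s" "0 \<le> s0"
    using s(1) \<open>T0 > 0\<close> \<open>T0 \<le> s0\<close> by auto
  have "z 1 t1' = z 1 s0"
    using rps123.z_const_if_R_lt_W[of s0 t1' 1] t1' \<open>0 \<le> s0\<close> by simp
  then have z1: "z 1 s = z 1 t1'"
    using z_mono[of s0 s 1] z_mono[of s t1' 1] s(1) \<open>0 \<le> s0\<close> by simp
  obtain F1: "z 1 s \<le> e * z 2 s - rps123.W 0" and F2: "z 2 s + rps123.W 0 \<le> e * z 3 s"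
    and F4: "e * z 3 s \<le> (1 + e) * z 2 s - z 1 s"
    using constraints_at_last_exit[OF \<open>0 < s\<close> _ s(2) t1'(2) z1[symmetric] s(3)] s(1) by auto
  have "z 1 s + z 2 s + z 3 s \<le> K"
    using K[OF z_nonneg z_nonneg F1 F2 exit_from_3[OF \<open>0 < s\<close> s(2)] F4] \<open>0 < s\<close> by simp
  moreover have "K < z 1 s + z 2 s + z 3 s"
    using large[of s] s(1) t1'(1) \<open>T0 \<le> s0\<close> by (simp add: S_123)
  ultimately show False by simp
qed

end

theorem lemma8:
  fixes e :: real and x :: "real \<Rightarrow> real^7"
  assumes "0 < e" and "e < 2/9"
    and "BR_solution (Umat e) x"
    and "\<not> (x 0 $ 1 = x 0 $ 2 \<and> x 0 $ 2 = x 0 $ 3)"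
    and "\<not> (x 0 $ 5 = x 0 $ 6 \<and> x 0 $ 6 = x 0 $ 7)"
  shows "\<exists>T>0. \<forall>i\<in>{1,2,3::7}.
           (Umat e *v x T) $ i < Max (range (\<lambda>j. (Umat e *v x T) $ j))"
proof (rule ccontr)
  assume contra: "\<not> ?thesis"
  have "\<exists>i\<in>{1, 2, 3}. \<forall>j. (Umat e *v x T) $ j \<le> (Umat e *v x T) $ i" if "0 < T" for T
  proof -
    obtain i where "i \<in> {1, 2, 3}" "\<not> (Umat e *v x T) $ i < Max (range (\<lambda>j. (Umat e *v x T) $ j))"
      using contra \<open>0 < T\<close> by blast
    moreover have "(Umat e *v x T) $ j \<le> Max (range (\<lambda>j. (Umat e *v x T) $ j))" for j
      by (rule Max_ge) auto
    ultimately show ?thesis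
      by (meson not_less order_trans)
  qed
  with assms interpret best_reply_in_123 e x
    by unfold_locales auto
  show False
    by (rule contradiction)
qed

end
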